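(* Let $n\ge1$, $A=\begin{bmatrix}1&2\\0&1\end{bmatrix}$, $B=\begin{bmatrix}1&0\\2&1\end{bmatrix}$, $\tau=\begin{bmatrix}0&-1\\1&-1\end{bmatrix}$, and $\Phi(n)=\langle A^n,B^n,\Gamma(2)'\rangle\subset\mathrm{PSL}_2(\mathbb{Z})$, where $\Gamma(2)'$ is the commutator subgroup of the principal congruence subgroup $\Gamma(2)$. Then the group of modular symbols $M_2(\Phi(n))$ is a free abelian group of rank $n^2+1$, with basis given by the Manin symbols \[[A^iB^j\tau]\ (1\le i\le n-1,\ 0\le j\le n-1),\qquad [A^{n-1}B^j]\ (0\le j\le n-1),\qquad [B^{n-1}\tau].\]
   Context: For a finite index subgroup $G\subset\mathrm{PSL}_2(\mathbb{Z})$, $X_G=\bar{\mathfrak{H}}/G$ with $\bar{\mathfrak{H}}=\mathfrak{H}\cup\mathbb{P}^1(\mathbb{Q})$, and its cusps are the images of $\mathbb{P}^1(\mathbb{Q})$. For $\alpha,\beta\in\mathbb{P}^1(\mathbb{Q})$, the modular symbol $\{\alpha,\beta\}$ is the class in $H_1(X_G(\mathbb{C}),\{\text{cusps}\};\mathbb{Z})$ of the image of a path from $\alpha$ to $\beta$ in $\bar{\mathfrak{H}}$. For $a\in\mathrm{PSL}_2(\mathbb{Z})$, the Manin symbol $[a]$ is $\{a\cdot0,a\cdot i\infty\}$; it depends only on the right coset $Ga$. The group of modular symbols $M_2(G)$ is the group generated by all modular symbols, identified with $H_1(X_G(\mathbb{C}),\{\text{cusps}\};\mathbb{Z})$ (equivalently,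 Manin's presentation: generated by the Manin symbols of right cosets, subject to $[a]+[a\sigma]=0$, $[a]+[a\tau]+[a\tau^2]=0$, with $\sigma=\begin{bmatrix}0&1\\-1&0\end{bmatrix}$). *)

theory Defs
  imports Main "HOL-Library.Function_Algebras"
begin

text \<open>A matrix [a b; c d] is the tuple (a,b,c,d).  PSL_2(Z) is handled through
  SL_2(Z): a subgroup of PSL_2(Z) is represented by its full preimage in SL_2(Z)
  (which contains -I); right cosets correspond bijectively.\<close>

type_synonym mat2 = "int \<times> int \<times> int \<times> int"

fun mmul :: "mat2 \<Rightarrow> mat2 \<Rightarrow> mat2" where
  "mmul (a, b, c, d) (e, f, g, h) = (a*e + b*g, a*f + b*h, c*e + d*g, c*f + d*h)"

fun minv :: "mat2 \<Rightarrow> mat2" where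
  "minv (a, b, c, d) = (d, -b, -c, a)"

definition mone :: mat2 where "mone = (1, 0, 0, 1)"

definition mneg_one :: mat2 where "mneg_one = (-1, 0, 0, -1)"

fun mpow :: "mat2 \<Rightarrow> nat \<Rightarrow> mat2" where
  "mpow m 0 = mone"
| "mpow m (Suc k) = mmul (mpow m k) m"

definition SL2 :: "mat2 set" where
  "SL2 = {(a, b, c, d). a*d - b*c = 1}"

definition matA :: mat2 where "matA = (1, 2, 0, 1)"
definition matB :: mat2 where "matB = (1, 0, 2, 1)"
definition mtau :: mat2 where "mtau = (0, -1, 1, -1)"
definition msigma :: mat2 where "msigma = (0, 1, -1, 0)"

definition Gamma2 :: "mat2 set" where
  "Gamma2 = {(a, b, c, d). a*d - b*c = 1 \<and> a mod 2 = 1 \<and> d mod 2 = 1 \<and> b mod 2 = 0 \<and> c mod 2 = 0}"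

inductive_set gen_subgroup :: "mat2 set \<Rightarrow> mat2 set" for S where
  gen_one: "mone \<in> gen_subgroup S"
| gen_base: "s \<in> S \<Longrightarrow> s \<in> gen_subgroup S"
| gen_mul: "x \<in> gen_subgroup S \<Longrightarrow> y \<in> gen_subgroup S \<Longrightarrow> mmul x y \<in> gen_subgroup S"
| gen_inv: "x \<in> gen_subgroup S \<Longrightarrow> minv x \<in> gen_subgroup S"

definition Gamma2_comm :: "mat2 set" where
  "Gamma2_comm = gen_subgroup {mmul (mmul x y) (mmul (minv x) (minv y)) | x y. x \<in> Gamma2 \<and> y \<in> Gamma2}"

text \<open>Preimage in SL_2(Z) of Phi(n) = < A^n, B^n, Gamma(2)' > in PSL_2(Z).\<close>
definition Phi :: "nat \<Rightarrow> mat2 set" where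
  "Phi n = gen_subgroup ({mpow matA n, mpow matB n, mneg_one} \<union> Gamma2_comm)"

definition rcoset :: "mat2 set \<Rightarrow> mat2 \<Rightarrow> mat2 set" where
  "rcoset G a = {mmul g a | g. g \<in> G}"

definition right_cosets :: "mat2 set \<Rightarrow> mat2 set set" where
  "right_cosets G = {rcoset G a | a. a \<in> SL2}"

definition free_cosets :: "mat2 set \<Rightarrow> (mat2 set \<Rightarrow> int) set" where
  "free_cosets G = {v. \<forall>x. x \<notin> right_cosets G \<longrightarrow> v x = 0}"

definition manin_gen :: "mat2 set \<Rightarrow> mat2 \<Rightarrow> (mat2 set \<Rightarrow> int)" where
  "manin_gen G a = (\<lambda>x. if x = rcoset G a then 1 else 0)"

definition manin_relators :: "mat2 set \<Rightarrow> (mat2 set \<Rightarrow> int) set" where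
  "manin_relators G =
     {manin_gen G a + manin_gen G (mmul a msigma) | a. a \<in> SL2} \<union>
     {manin_gen G a + manin_gen G (mmul a mtau) + manin_gen G (mmul a (mmul mtau mtau)) | a. a \<in> SL2}"

inductive_set zspan :: "('a \<Rightarrow> int) set \<Rightarrow> ('a \<Rightarrow> int) set" for S where
  zspan_zero: "0 \<in> zspan S"
| zspan_add: "w \<in> zspan S \<Longrightarrow> v \<in> S \<Longrightarrow> w + v \<in> zspan S"
| zspan_diff: "w \<in> zspan S \<Longrightarrow> v \<in> S \<Longrightarrow> w - v \<in> zspan S"

text \<open>M_2(G) = free_cosets G / manin_rel G.  Two vectors represent the same modular
  symbol iff their difference lies in manin_rel G.\<close>
definition manin_rel :: "mat2 set \<Rightarrow> (mat2 set \<Rightarrow> int) set" where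
  "manin_rel G = zspan (manin_relators G)"

definition is_manin_basis :: "mat2 set \<Rightarrow> 'i set \<Rightarrow> ('i \<Rightarrow> mat2) \<Rightarrow> bool" where
  "is_manin_basis G I b \<longleftrightarrow> finite I \<and> (\<forall>k\<in>I. b k \<in> SL2) \<and>
     (\<forall>v \<in> free_cosets G. \<exists>!c. (\<forall>k. k \<notin> I \<longrightarrow> c k = 0) \<and>
        v - (\<lambda>x. \<Sum>k\<in>I. c k * manin_gen G (b k) x) \<in> manin_rel G)"

definition basis_index :: "nat \<Rightarrow> (nat \<times> nat \<times> nat) set" where
  "basis_index n = {(0, i, j) | i j. 1 \<le> i \<and> i \<le> n - 1 \<and> j \<le> n - 1}
                 \<union> {(1, 0, j) | j. j \<le> n - 1} \<union> {(2, 0, 0)}"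

fun basis_mat :: "nat \<Rightarrow> nat \<times> nat \<times> nat \<Rightarrow> mat2" where
  "basis_mat n (t, i, j) =
     (if t = 0 then mmul (mmul (mpow matA i) (mpow matB j)) mtau
      else if t = 1 then mmul (mpow matA (n - 1)) (mpow matB j)
      else mmul (mpow matB (n - 1)) mtau)"

end

theory Submission
  imports Defs "HOL-Library.Product_Plus"
begin

text \<open>\<open>\<Gamma>(2)\<close> is \<open>{\<plusminus>1}\<close> times the free group on \<open>A\<close> and \<open>B\<close>, so the exponent sums
  \<open>(u, v)\<close> of \<open>A\<close> and \<open>B\<close> define a homomorphism \<open>\<Gamma>(2) \<rightarrow> \<int>\<^sup>2\<close>; here it is computed by a
  Euclidean reduction. Since \<open>g \<equiv> A\<^sup>u B\<^sup>v\<close> modulo \<open>\<plusminus>\<Gamma>(2)' \<subseteq> \<Phi>(n)\<close>, the group \<open>\<Phi>(n)\<close>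
  consists of the \<open>g \<in> \<Gamma>(2)\<close> with \<open>n\<close> dividing both exponent sums. Hence its \<open>6 n\<^sup>2\<close> right
  cosets are labelled by a class in \<open>SL\<^sub>2(\<int>/2)\<close> and a pair in \<open>(\<int>/n)\<^sup>2\<close>, and \<open>\<sigma>\<close>, \<open>\<tau>\<close> act
  on the labels by explicit shifts. Manin's relations then express every symbol, row by row
  starting from \<open>u = n - 1\<close>, as an integer combination of the \<open>n\<^sup>2 + 1\<close> given symbols;
  conversely an explicit coordinate map kills all relations and is the identity on these
  symbols, so the combination is unique.\<close>

lemma mmul_assoc: "mmul (mmul x y) z = mmul x (mmul y z)"
  by (cases x; cases y; cases z) (simp add: algebra_simps)

lemma mmul_mone_left [simp]: "mmul mone x = x"
  by (cases x) (simp add: mone_def)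

lemma mmul_mone_right [simp]: "mmul x mone = x"
  by (cases x) (simp add: mone_def)

lemma SL2_iff: "(a, b, c, d) \<in> SL2 \<longleftrightarrow> a * d - b * c = 1"
  by (simp add: SL2_def)

lemma mmul_minv_left: "x \<in> SL2 \<Longrightarrow> mmul (minv x) x = mone"
  by (cases x) (auto simp: SL2_def mone_def algebra_simps)

lemma mmul_minv_right: "x \<in> SL2 \<Longrightarrow> mmul x (minv x) = mone"
  by (cases x) (auto simp: SL2_def mone_def algebra_simps)

lemma SL2_mmul: "x \<in> SL2 \<Longrightarrow> y \<in> SL2 \<Longrightarrow> mmul x y \<in> SL2"
proof (cases x; cases y)
  fix a b c d e f g h
  assume "x \<in> SL2" "y \<in> SL2" "x = (a, b, c, d)" "y = (e, f, g, h)"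
  moreover have "(a*e + b*g) * (c*f + d*h) - (a*f + b*h) * (c*e + d*g) = (a*d - b*c) * (e*h - f*g)"
    by algebra
  ultimately show ?thesis by (simp add: SL2_def)
qed

lemma SL2_minv: "x \<in> SL2 \<Longrightarrow> minv x \<in> SL2"
  by (cases x) (auto simp: SL2_def algebra_simps)

lemma minv_minv [simp]: "minv (minv x) = x"
  by (cases x) simp

lemma minv_mmul: "minv (mmul x y) = mmul (minv y) (minv x)"
  by (cases x; cases y) (simp add: algebra_simps)

lemma gen_subgroup_least:
  assumes "S \<subseteq> H" "mone \<in> H"
    and "\<And>x y. x \<in> H \<Longrightarrow> y \<in> H \<Longrightarrow> mmul x y \<in> H" "\<And>x. x \<in> H \<Longrightarrow> minv x \<in> H"
  shows "gen_subgroup S \<subseteq> H"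
proof
  fix x assume "x \<in> gen_subgroup S"
  then show "x \<in> H" by induction (use assms in auto)
qed

lemma gen_subgroup_mono: "S \<subseteq> gen_subgroup T \<Longrightarrow> gen_subgroup S \<subseteq> gen_subgroup T"
  by (rule gen_subgroup_least) (auto intro: gen_subgroup.intros)


definition Apow :: "int \<Rightarrow> mat2" where "Apow j = (1, 2 * j, 0, 1)"
definition Bpow :: "int \<Rightarrow> mat2" where "Bpow j = (1, 0, 2 * j, 1)"

lemma Apow_mmul: "mmul (Apow j) (p, b, q, d) = (p + 2 * j * q, b + 2 * j * d, q, d)"
  by (simp add: Apow_def)

lemma Bpow_mmul: "mmul (Bpow j) (p, b, q, d) = (p, b, q + 2 * j * p, d + 2 * j * b)"
  by (simp add: Bpow_def algebra_simps)

lemma Apow_add: "mmul (Apow i) (Apow j) = Apow (i + j)"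
  by (simp add: Apow_def algebra_simps)

lemma Bpow_add: "mmul (Bpow i) (Bpow j) = Bpow (i + j)"
  by (simp add: Bpow_def algebra_simps)

lemma minv_Apow: "minv (Apow j) = Apow (- j)"
  by (simp add: Apow_def)

lemma minv_Bpow: "minv (Bpow j) = Bpow (- j)"
  by (simp add: Bpow_def)

lemma Apow_zero: "Apow 0 = mone"
  by (simp add: Apow_def mone_def)

lemma mpow_matA: "mpow matA k = Apow (int k)"
  by (induction k) (simp_all add: mone_def Apow_def matA_def algebra_simps)

lemma mpow_matB: "mpow matB k = Bpow (int k)"
  by (induction k) (simp_all add: mone_def Bpow_def matB_def algebra_simps)

lemma Gamma2_iff:
  "(p, b, q, d) \<in> Gamma2 \<longleftrightarrow> p*d - b*q = 1 \<and> p mod 2 = 1 \<and> d mod 2 = 1 \<and> b mod 2 = 0 \<and> q mod 2 = 0"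
  by (simp add: Gamma2_def)

fun mod2 :: "mat2 \<Rightarrow> mat2" where
  "mod2 (p, b, q, d) = (p mod 2, b mod 2, q mod 2, d mod 2)"

lemma mod2_mmul: "mod2 (mmul x y) = mod2 (mmul (mod2 x) (mod2 y))"
proof -
  have *: "(x*y + z*w) mod 2 = ((x mod 2) * (y mod 2) + (z mod 2) * (w mod 2)) mod 2" for x y z w :: int
  proof -
    have "((x mod 2) * (y mod 2) + (z mod 2) * (w mod 2)) mod 2
        = ((x mod 2) * (y mod 2) mod 2 + (z mod 2) * (w mod 2) mod 2) mod 2"
      by (rule mod_add_eq[symmetric])
    also have "\<dots> = (x * y mod 2 + z * w mod 2) mod 2"
      by (simp only: mod_mult_eq)
    finally show ?thesis
      by (simp add: mod_add_eq)
  qed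
  show ?thesis
    by (cases x; cases y) (simp only: mmul.simps mod2.simps prod.inject, intro conjI; rule *)
qed

lemma Gamma2_iff_mod2: "x \<in> Gamma2 \<longleftrightarrow> x \<in> SL2 \<and> mod2 x = (1, 0, 0, 1)"
  by (cases x) (auto simp: Gamma2_iff SL2_iff)

lemma Gamma2_SL2: "x \<in> Gamma2 \<Longrightarrow> x \<in> SL2"
  by (simp add: Gamma2_iff_mod2)

lemma Gamma2_mmul: "x \<in> Gamma2 \<Longrightarrow> y \<in> Gamma2 \<Longrightarrow> mmul x y \<in> Gamma2"
  using mod2_mmul[of x y] by (simp add: Gamma2_iff_mod2 SL2_mmul)

lemma Gamma2_minv: "x \<in> Gamma2 \<Longrightarrow> minv x \<in> Gamma2"
  by (cases x) (auto simp: Gamma2_iff mult.commute)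

lemma Apow_Gamma2 [simp]: "Apow j \<in> Gamma2"
  by (simp add: Apow_def Gamma2_iff)

lemma Bpow_Gamma2 [simp]: "Bpow j \<in> Gamma2"
  by (simp add: Bpow_def Gamma2_iff)

lemma mone_Gamma2 [simp]: "mone \<in> Gamma2"
  by (simp add: mone_def Gamma2_iff)

lemma mneg_one_Gamma2 [simp]: "mneg_one \<in> Gamma2"
  by (simp add: mneg_one_def Gamma2_iff)

lemma abs_neq_if_parity_neq: "x mod 2 \<noteq> y mod 2 \<Longrightarrow> \<bar>x\<bar> \<noteq> \<bar>y :: int\<bar>"
  by (auto simp: abs_eq_iff) presburger

text \<open>Division with remainder in \<open>[-\<bar>q\<bar>, \<bar>q\<bar>)\<close> by the even number \<open>2 q\<close>;
  it is the Euclidean step that writes an element of \<open>\<Gamma>(2)\<close> as a word in \<open>A, B, -1\<close>.\<close>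

definition brem :: "int \<Rightarrow> int \<Rightarrow> int" where
  "brem p q = (p + \<bar>q\<bar>) mod (2 * \<bar>q\<bar>) - \<bar>q\<bar>"

definition bquot :: "int \<Rightarrow> int \<Rightarrow> int" where
  "bquot p q = (p - brem p q) div (2 * q)"

lemma brem_bquot: "p - 2 * bquot p q * q = brem p q"
proof -
  have "p - brem p q = (p + \<bar>q\<bar>) - (p + \<bar>q\<bar>) mod (2 * \<bar>q\<bar>)"
    by (simp add: brem_def)
  then have "2 * \<bar>q\<bar> dvd p - brem p q"
    by (simp only: dvd_minus_mod)
  moreover have "2 * q dvd 2 * \<bar>q\<bar>"
    by simp
  ultimately have "2 * q dvd p - brem p q"
    using dvd_trans by blast
  then obtain t where t: "p - brem p q = 2 * q * t"
    by (elim dvdE)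
  show ?thesis
  proof (cases "q = 0")
    case True
    then show ?thesis by (simp add: brem_def bquot_def)
  next
    case False
    then have "bquot p q = t"
      using t by (simp add: bquot_def)
    moreover have "p - brem p q = 2 * t * q"
      using t by (simp only: ac_simps)
    ultimately show ?thesis
      by (simp only:)
  qed
qed

lemma brem_bounds: "q \<noteq> 0 \<Longrightarrow> - \<bar>q\<bar> \<le> brem p q \<and> brem p q < \<bar>q\<bar>"
  by (simp add: brem_def pos_mod_bound)

lemma abs_brem_le: "q \<noteq> 0 \<Longrightarrow> \<bar>brem p q\<bar> \<le> \<bar>q\<bar>"
  using brem_bounds[of q p] by auto

lemma balanced_reduction:
  assumes "q \<noteq> 0" "p mod 2 \<noteq> q mod 2"
  shows "\<bar>p - 2 * bquot p q * q\<bar> < \<bar>q\<bar>"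
proof -
  have "brem p q \<noteq> - \<bar>q\<bar>"
  proof
    assume "brem p q = - \<bar>q\<bar>"
    then have "p = 2 * (bquot p q * q) - \<bar>q\<bar>"
      using brem_bquot[of p q] by simp
    then show False
      using assms(2) by (cases "q \<ge> 0") presburger+
  qed
  then show ?thesis
    using brem_bounds[OF assms(1), of p] brem_bquot[of p q] by auto
qed

lemma balanced_quotient_unique:
  fixes p q k k' :: int
  assumes "\<bar>p - 2 * k * q\<bar> < \<bar>q\<bar>" "\<bar>p - 2 * k' * q\<bar> < \<bar>q\<bar>"
  shows "k = k'"
proof (rule ccontr)
  assume "k \<noteq> k'"
  then have "1 \<le> \<bar>k - k'\<bar>" by linarith
  then have "\<bar>q\<bar> \<le> \<bar>k - k'\<bar> * \<bar>q\<bar>"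
    using mult_right_mono[of 1 "\<bar>k - k'\<bar>" "\<bar>q\<bar>"] by simp
  moreover have "\<bar>2 * (k - k') * q\<bar> = 2 * (\<bar>k - k'\<bar> * \<bar>q\<bar>)"
    by (simp only: abs_mult abs_numeral mult.assoc)
  ultimately have "2 * \<bar>q\<bar> \<le> \<bar>2 * (k - k') * q\<bar>"
    by linarith
  moreover have "2 * (k - k') * q = (p - 2 * k' * q) - (p - 2 * k * q)"
    by (simp add: algebra_simps)
  ultimately show False
    using assms by linarith
qed

lemma Gamma2_induct [consumes 1, case_names one neg_one A B]:
  assumes "g \<in> Gamma2" "P mone" "P mneg_one"
    and A: "\<And>g k. g \<in> Gamma2 \<Longrightarrow> P g \<Longrightarrow> P (mmul (Apow k) g)"
    and B: "\<And>g k. g \<in> Gamma2 \<Longrightarrow> P g \<Longrightarrow> P (mmul (Bpow k) g)"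
  shows "P g"
  using assms(1)
proof (induction "(\<lambda>(p, b, q, d). nat \<bar>p\<bar> + nat \<bar>q\<bar>) g" arbitrary: g rule: less_induct)
  case less
  obtain p b q d where g: "g = (p, b, q, d)" by (cases g)
  have G: "(p, b, q, d) \<in> Gamma2" using less g by simp
  then have det: "p * d - b * q = 1" and par: "p mod 2 = 1" "q mod 2 = 0" "b mod 2 = 0"
    by (auto simp: Gamma2_iff)
  have "p \<noteq> 0" "\<bar>p\<bar> \<noteq> \<bar>q\<bar>"
    using par abs_neq_if_parity_neq[of p q] by auto
  consider "q = 0" | "q \<noteq> 0" "\<bar>p\<bar> > \<bar>q\<bar>" | "\<bar>q\<bar> > \<bar>p\<bar>"
    using \<open>\<bar>p\<bar> \<noteq> \<bar>q\<bar>\<close> by fastforce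
  then show ?case
  proof cases
    case 1
    then have "p * d = 1" using det by simp
    then have "p = 1 \<and> d = 1 \<or> p = -1 \<and> d = -1" by (simp add: zmult_eq_1_iff)
    moreover have "b = 2 * (b div 2)" using par by presburger
    ultimately have "g = mmul (Apow (b div 2)) mone \<or> g = mmul (Apow (- (b div 2))) mneg_one"
      using g 1 by (auto simp: Apow_def mone_def mneg_one_def)
    then show ?thesis
      using A[OF mone_Gamma2 assms(2)] A[OF mneg_one_Gamma2 assms(3)] by auto
  next
    case 2
    define k where "k = bquot p q"
    define g' where "g' = (p - 2 * k * q, b - 2 * k * d, q, d)"
    have "g' = mmul (Apow (- k)) g" by (simp add: g g'_def Apow_mmul)
    then have "g' \<in> Gamma2" using G g Gamma2_mmul by simp
    moreover have "\<bar>p - 2 * k * q\<bar> < \<bar>q\<bar>"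
      unfolding k_def using 2 par by (intro balanced_reduction) auto
    ultimately have "P g'" using less 2 g by (auto simp: g'_def)
    moreover have "g = mmul (Apow k) g'" by (simp add: g g'_def Apow_mmul)
    ultimately show ?thesis using A \<open>g' \<in> Gamma2\<close> by simp
  next
    case 3
    define k where "k = bquot q p"
    define g' where "g' = (p, b, q - 2 * k * p, d - 2 * k * b)"
    have "g' = mmul (Bpow (- k)) g" by (simp add: g g'_def Bpow_mmul)
    then have "g' \<in> Gamma2" using G g Gamma2_mmul by simp
    moreover have "\<bar>q - 2 * k * p\<bar> < \<bar>p\<bar>"
      unfolding k_def using \<open>p \<noteq> 0\<close> par by (intro balanced_reduction) auto
    ultimately have "P g'" using less 3 g by (auto simp: g'_def)
    moreover have "g = mmul (Bpow k) g'" by (simp add: g g'_def Bpow_mmul)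
    ultimately show ?thesis using B \<open>g' \<in> Gamma2\<close> by simp
  qed
qed

section \<open>Exponent sums on \<open>\<Gamma>(2)\<close>\<close>

text \<open>On the upper triangular elements \<open>\<plusminus>A\<^sup>j = (\<plusminus>1, 2 j, 0, \<plusminus>1)\<close> the value \<open>p b div 2\<close> is \<open>j\<close>.\<close>

function expsum :: "mat2 \<Rightarrow> int \<times> int" where
  "expsum (p, b, q, d) =
    (if q = 0 then (p * b div 2, 0)
     else if \<bar>p\<bar> > \<bar>q\<bar> then expsum (brem p q, b - 2 * bquot p q * d, q, d) + (bquot p q, 0)
     else if p \<noteq> 0 \<and> \<bar>q\<bar> > \<bar>p\<bar> then expsum (p, b, brem q p, d - 2 * bquot q p * b) + (0, bquot q p)
     else (0, 0))"
  by pat_completeness auto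
termination
  apply (relation "measure (\<lambda>(p, b, q, d). nat \<bar>p\<bar> + nat \<bar>q\<bar>)")
    apply simp
   subgoal for p b q d using abs_brem_le[of q p] by fastforce
  subgoal for p b q d using abs_brem_le[of p q] by fastforce
  done

declare expsum.simps [simp del]

lemma expsum_lower_zero: "expsum (p, b, 0, d) = (p * b div 2, 0)"
  by (simp add: expsum.simps)

lemma expsum_reduce_A:
  assumes "q \<noteq> 0" "p mod 2 \<noteq> q mod 2" "\<bar>p - 2 * k * q\<bar> < \<bar>q\<bar>"
  shows "expsum (p, b, q, d) = expsum (p - 2 * k * q, b - 2 * k * d, q, d) + (k, 0)"
proof (cases "\<bar>p\<bar> > \<bar>q\<bar>")
  case True
  have k: "bquot p q = k"
    using balanced_quotient_unique[OF balanced_reduction[OF assms(1,2)] assms(3)] .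
  then have "brem p q = p - 2 * k * q"
    using brem_bquot[of p q] by simp
  then show ?thesis
    using assms(1) True k by (subst expsum.simps) simp
next
  case False
  then have "\<bar>p - 2 * 0 * q\<bar> < \<bar>q\<bar>"
    using abs_neq_if_parity_neq[OF assms(2)] by simp
  then have "k = 0"
    using balanced_quotient_unique[OF assms(3)] by blast
  then show ?thesis by (simp add: zero_prod_def)
qed

lemma expsum_reduce_B:
  assumes "p \<noteq> 0" "p mod 2 \<noteq> q mod 2" "\<bar>q - 2 * k * p\<bar> < \<bar>p\<bar>"
  shows "expsum (p, b, q, d) = expsum (p, b, q - 2 * k * p, d - 2 * k * b) + (0, k)"
proof (cases "\<bar>q\<bar> > \<bar>p\<bar>")
  case True
  have k: "bquot q p = k"
    using balanced_quotient_unique[OF balanced_reduction[OF assms(1)] assms(3)] assms(2) by simp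
  moreover have "brem q p = q - 2 * k * p"
    using brem_bquot[of q p] k by simp
  moreover have "q \<noteq> 0"
    using True by auto
  ultimately show ?thesis
    using assms(1) True by (subst expsum.simps) simp
next
  case False
  then have "\<bar>q - 2 * 0 * p\<bar> < \<bar>p\<bar>"
    using abs_neq_if_parity_neq[OF assms(2)] by simp
  then have "k = 0"
    using balanced_quotient_unique[OF assms(3)] by blast
  then show ?thesis by (simp add: zero_prod_def)
qed

lemma expsum_Apow_mmul:
  assumes "h \<in> Gamma2"
  shows "expsum (mmul (Apow j) h) = expsum h + (j, 0)"
proof -
  obtain p b q d where h: "h = (p, b, q, d)" by (cases h)
  have det: "p * d - b * q = 1" and par: "p mod 2 \<noteq> q mod 2"
    using assms h by (auto simp: Gamma2_iff)
  show ?thesis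
  proof (cases "q = 0")
    case True
    then have "p * (b + 2 * j * d) = p * b + j * 2"
      using det by (simp add: algebra_simps)
    then show ?thesis
      using True by (simp add: h Apow_mmul expsum_lower_zero)
  next
    case False
    define k where "k = bquot p q"
    have red: "\<bar>p - 2 * k * q\<bar> < \<bar>q\<bar>"
      unfolding k_def using balanced_reduction[OF False par] .
    have "(p + 2 * j * q) mod 2 = p mod 2"
      unfolding mult.assoc by (rule mod_mult_self2)
    moreover have "\<bar>(p + 2 * j * q) - 2 * (k + j) * q\<bar> < \<bar>q\<bar>"
      using red by (simp add: algebra_simps)
    ultimately have "expsum (p + 2 * j * q, b + 2 * j * d, q, d)
        = expsum ((p + 2 * j * q) - 2 * (k + j) * q, (b + 2 * j * d) - 2 * (k + j) * d, q, d) + (k + j, 0)"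
      using par by (intro expsum_reduce_A[OF False]) simp_all
    moreover have "(p + 2 * j * q) - 2 * (k + j) * q = p - 2 * k * q"
      and "(b + 2 * j * d) - 2 * (k + j) * d = b - 2 * k * d"
      by (simp_all add: algebra_simps)
    ultimately have "expsum (p + 2 * j * q, b + 2 * j * d, q, d)
        = expsum (p - 2 * k * q, b - 2 * k * d, q, d) + (k + j, 0)"
      by (simp only:)
    moreover have "expsum (p, b, q, d) = expsum (p - 2 * k * q, b - 2 * k * d, q, d) + (k, 0)"
      by (rule expsum_reduce_A[OF False par red])
    ultimately show ?thesis
      by (simp add: h Apow_mmul)
  qed
qed

lemma expsum_Bpow_mmul:
  assumes "h \<in> Gamma2"
  shows "expsum (mmul (Bpow j) h) = expsum h + (0, j)"
proof -
  obtain p b q d where h: "h = (p, b, q, d)" by (cases h)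
  have par: "p mod 2 \<noteq> q mod 2" and "p \<noteq> 0"
    using assms h by (auto simp: Gamma2_iff)
  define k where "k = bquot q p"
  have red: "\<bar>q - 2 * k * p\<bar> < \<bar>p\<bar>"
    unfolding k_def using balanced_reduction[OF \<open>p \<noteq> 0\<close>] par by simp
  have "(q + 2 * j * p) mod 2 = q mod 2"
    unfolding mult.assoc by (rule mod_mult_self2)
  moreover have "\<bar>(q + 2 * j * p) - 2 * (k + j) * p\<bar> < \<bar>p\<bar>"
    using red by (simp add: algebra_simps)
  ultimately have "expsum (p, b, q + 2 * j * p, d + 2 * j * b)
      = expsum (p, b, (q + 2 * j * p) - 2 * (k + j) * p, (d + 2 * j * b) - 2 * (k + j) * b) + (0, k + j)"
    using par by (intro expsum_reduce_B[OF \<open>p \<noteq> 0\<close>]) simp_all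
  moreover have "(q + 2 * j * p) - 2 * (k + j) * p = q - 2 * k * p"
    and "(d + 2 * j * b) - 2 * (k + j) * b = d - 2 * k * b"
    by (simp_all add: algebra_simps)
  ultimately have "expsum (p, b, q + 2 * j * p, d + 2 * j * b)
      = expsum (p, b, q - 2 * k * p, d - 2 * k * b) + (0, k + j)"
    by (simp only:)
  moreover have "expsum (p, b, q, d) = expsum (p, b, q - 2 * k * p, d - 2 * k * b) + (0, k)"
    by (rule expsum_reduce_B[OF \<open>p \<noteq> 0\<close> par red])
  ultimately show ?thesis
    by (simp add: h Bpow_mmul)
qed

lemma expsum_mone [simp]: "expsum mone = 0"
  by (simp add: mone_def expsum_lower_zero zero_prod_def)

lemma expsum_mneg_one [simp]: "expsum mneg_one = 0"
  by (simp add: mneg_one_def expsum_lower_zero zero_prod_def)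

lemma expsum_Apow [simp]: "expsum (Apow j) = (j, 0)"
  by (simp add: Apow_def expsum_lower_zero)

lemma expsum_Bpow [simp]: "expsum (Bpow j) = (0, j)"
  using expsum_Bpow_mmul[OF mone_Gamma2, of j] by simp

lemma mneg_one_mmul_commute: "mmul mneg_one (mmul x y) = mmul x (mmul mneg_one y)"
  by (cases x; cases y) (simp add: mneg_one_def)

lemma expsum_mneg_one_mmul:
  assumes "g \<in> Gamma2"
  shows "expsum (mmul mneg_one g) = expsum g"
  using assms
proof (induction rule: Gamma2_induct)
  case one
  then show ?case by simp
next
  case neg_one
  have "mmul mneg_one mneg_one = mone" by (simp add: mneg_one_def mone_def)
  then show ?case by simp
next
  case (A g k)
  then show ?case
    by (simp add: mneg_one_mmul_commute expsum_Apow_mmul Gamma2_mmul)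
next
  case (B g k)
  then show ?case
    by (simp add: mneg_one_mmul_commute expsum_Bpow_mmul Gamma2_mmul)
qed

lemma expsum_mmul:
  assumes "g \<in> Gamma2" "h \<in> Gamma2"
  shows "expsum (mmul g h) = expsum g + expsum h"
  using assms(1)
proof (induction rule: Gamma2_induct)
  case one
  then show ?case by simp
next
  case neg_one
  then show ?case by (simp add: expsum_mneg_one_mmul[OF assms(2)])
next
  case (A g k)
  then show ?case
    by (simp add: mmul_assoc expsum_Apow_mmul Gamma2_mmul assms(2) add_ac)
next
  case (B g k)
  then show ?case
    by (simp add: mmul_assoc expsum_Bpow_mmul Gamma2_mmul assms(2) add_ac)
qed

lemma expsum_minv:
  assumes "g \<in> Gamma2"
  shows "expsum (minv g) = - expsum g"
  using expsum_mmul[OF assms Gamma2_minv[OF assms]] mmul_minv_right[OF Gamma2_SL2[OF assms]]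
  by (simp add: eq_neg_iff_add_eq_0 add.commute)

section \<open>\<open>\<Phi>(n)\<close> as a congruence condition\<close>

definition commutators :: "mat2 set" where
  "commutators = {mmul (mmul x y) (mmul (minv x) (minv y)) | x y. x \<in> Gamma2 \<and> y \<in> Gamma2}"

definition conj :: "mat2 \<Rightarrow> mat2 \<Rightarrow> mat2" where
  "conj h x = mmul (mmul h x) (minv h)"

definition ABpow :: "int \<Rightarrow> int \<Rightarrow> mat2" where
  "ABpow u v = mmul (Apow u) (Bpow v)"

lemma Gamma2_comm_eq: "Gamma2_comm = gen_subgroup commutators"
  by (simp add: Gamma2_comm_def commutators_def)

lemma commutators_Gamma2: "commutators \<subseteq> Gamma2"
  unfolding commutators_def by (blast intro: Gamma2_mmul Gamma2_minv)

lemma expsum_commutators: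
  assumes "c \<in> commutators"
  shows "expsum c = 0"
proof -
  obtain x y where "c = mmul (mmul x y) (mmul (minv x) (minv y))" "x \<in> Gamma2" "y \<in> Gamma2"
    using assms unfolding commutators_def by blast
  then show ?thesis
    by (simp add: expsum_mmul expsum_minv Gamma2_mmul Gamma2_minv del: mmul.simps minv.simps)
qed

lemma Gamma2_comm_subset: "Gamma2_comm \<subseteq> {g \<in> Gamma2. expsum g = 0}"
  unfolding Gamma2_comm_eq
proof (rule gen_subgroup_least)
  show "commutators \<subseteq> {g \<in> Gamma2. expsum g = 0}"
    using commutators_Gamma2 expsum_commutators by blast
qed (simp_all add: Gamma2_mmul Gamma2_minv expsum_mmul expsum_minv del: mmul.simps minv.simps)

lemma Phi_subset: "Phi n \<subseteq> {g \<in> Gamma2. int n dvd fst (expsum g) \<and> int n dvd snd (expsum g)}"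
  unfolding Phi_def
proof (rule gen_subgroup_least)
  have "Gamma2_comm \<subseteq> {g \<in> Gamma2. int n dvd fst (expsum g) \<and> int n dvd snd (expsum g)}"
    using Gamma2_comm_subset by force
  then show "{mpow matA n, mpow matB n, mneg_one} \<union> Gamma2_comm
      \<subseteq> {g \<in> Gamma2. int n dvd fst (expsum g) \<and> int n dvd snd (expsum g)}"
    by (simp add: mpow_matA mpow_matB)
qed (simp_all add: Gamma2_mmul Gamma2_minv expsum_mmul expsum_minv del: mmul.simps minv.simps)

lemma Phi_mmul: "x \<in> Phi n \<Longrightarrow> y \<in> Phi n \<Longrightarrow> mmul x y \<in> Phi n"
  unfolding Phi_def by (rule gen_subgroup.gen_mul)

lemma Phi_minv: "x \<in> Phi n \<Longrightarrow> minv x \<in> Phi n"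
  unfolding Phi_def by (rule gen_subgroup.gen_inv)

lemma mone_Phi: "mone \<in> Phi n"
  unfolding Phi_def by (rule gen_subgroup.gen_one)

lemma Apow_gen_Phi: "Apow (int n) \<in> Phi n"
  unfolding Phi_def mpow_matA[symmetric] by (rule gen_subgroup.gen_base) simp

lemma Bpow_gen_Phi: "Bpow (int n) \<in> Phi n"
  unfolding Phi_def mpow_matB[symmetric] by (rule gen_subgroup.gen_base) simp

lemma Apow_Phi: "Apow (int n * t) \<in> Phi n"
proof (induction t rule: int_induct[where k = 0])
  case base
  show ?case by (simp add: Apow_zero mone_Phi)
next
  case (step1 i)
  show ?case using Phi_mmul[OF step1(2) Apow_gen_Phi] by (simp add: Apow_add algebra_simps)
next
  case (step2 i)
  show ?case
    using Phi_mmul[OF step2(2) Phi_minv[OF Apow_gen_Phi]] by (simp add: minv_Apow Apow_add algebra_simps)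
qed

lemma Bpow_Phi: "Bpow (int n * t) \<in> Phi n"
proof (induction t rule: int_induct[where k = 0])
  case base
  show ?case by (simp add: Bpow_def mone_def[symmetric] mone_Phi)
next
  case (step1 i)
  show ?case using Phi_mmul[OF step1(2) Bpow_gen_Phi] by (simp add: Bpow_add algebra_simps)
next
  case (step2 i)
  show ?case
    using Phi_mmul[OF step2(2) Phi_minv[OF Bpow_gen_Phi]] by (simp add: minv_Bpow Bpow_add algebra_simps)
qed

definition Gamma2_comm_pm :: "mat2 set" where
  "Gamma2_comm_pm = gen_subgroup ({mneg_one} \<union> commutators)"

lemma Gamma2_comm_pm_Phi: "Gamma2_comm_pm \<subseteq> Phi n"
proof -
  have "commutators \<subseteq> Gamma2_comm"
    unfolding Gamma2_comm_eq by (auto intro: gen_subgroup.gen_base)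
  then show ?thesis
    unfolding Gamma2_comm_pm_def Phi_def by (intro gen_subgroup_mono) (auto intro: gen_subgroup.gen_base)
qed

lemma conj_mmul: "h \<in> SL2 \<Longrightarrow> conj h (mmul x y) = mmul (conj h x) (conj h y)"
  by (simp add: conj_def mmul_assoc mmul_minv_left del: mmul.simps)
    (simp add: mmul_assoc[symmetric] mmul_minv_left)

lemma conj_minv: "conj h (minv x) = minv (conj h x)"
  by (simp add: conj_def minv_mmul mmul_assoc)

lemma conj_commutators:
  assumes "h \<in> Gamma2" "c \<in> commutators"
  shows "conj h c \<in> commutators"
proof -
  obtain x y where c: "c = mmul (mmul x y) (mmul (minv x) (minv y))" "x \<in> Gamma2" "y \<in> Gamma2"
    using assms(2) by (auto simp: commutators_def)
  have "conj h c = mmul (mmul (conj h x) (conj h y)) (mmul (minv (conj h x)) (minv (conj h y)))"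
    using c(1) Gamma2_SL2[OF assms(1)] by (simp add: conj_mmul conj_minv del: mmul.simps)
  moreover have "conj h x \<in> Gamma2" "conj h y \<in> Gamma2"
    using assms(1) c by (simp_all add: conj_def Gamma2_mmul Gamma2_minv del: mmul.simps)
  ultimately show ?thesis
    unfolding commutators_def by blast
qed

lemma Gamma2_comm_pm_conj:
  assumes "h \<in> Gamma2" "c \<in> Gamma2_comm_pm"
  shows "conj h c \<in> Gamma2_comm_pm"
proof -
  have h: "h \<in> SL2" using assms(1) by (rule Gamma2_SL2)
  have "conj h mneg_one = mneg_one" "conj h mone = mone"
    using h by (cases h; auto simp: conj_def mneg_one_def mone_def SL2_iff algebra_simps)+
  then have "Gamma2_comm_pm \<subseteq> {c. conj h c \<in> Gamma2_comm_pm}"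
    unfolding Gamma2_comm_pm_def
    using conj_commutators[OF assms(1)]
    by (intro gen_subgroup_least)
      (auto simp: conj_mmul[OF h] conj_minv intro: gen_subgroup.intros simp del: mmul.simps)
  then show ?thesis using assms(2) by blast
qed

lemma Gamma2_decomp:
  assumes "g \<in> Gamma2"
  shows "mmul g (minv (ABpow (fst (expsum g)) (snd (expsum g)))) \<in> Gamma2_comm_pm"
  using assms
proof (induction rule: Gamma2_induct)
  case one
  have "mmul mone (minv (ABpow 0 0)) = mone"
    by (simp add: ABpow_def Apow_def Bpow_def mone_def)
  then show ?case
    unfolding Gamma2_comm_pm_def by (simp add: gen_subgroup.gen_one del: mmul.simps)
next
  case neg_one
  have "mmul mneg_one (minv (ABpow 0 0)) = mneg_one"
    by (simp add: ABpow_def Apow_def Bpow_def mneg_one_def)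
  then show ?case
    unfolding Gamma2_comm_pm_def by (simp add: gen_subgroup.gen_base del: mmul.simps)
next
  case (A g k)
  define u v where "u = fst (expsum g)" and "v = snd (expsum g)"
  have "mmul (mmul (Apow k) g) (minv (ABpow (u + k) v)) = conj (Apow k) (mmul g (minv (ABpow u v)))"
    by (cases g) (simp add: conj_def ABpow_def Apow_def Bpow_def algebra_simps)
  then show ?case
    using Gamma2_comm_pm_conj[OF Apow_Gamma2 A.IH] A.hyps
    by (simp add: expsum_Apow_mmul u_def v_def add.commute del: mmul.simps)
next
  case (B g k)
  define u v where "u = fst (expsum g)" and "v = snd (expsum g)"
  have "mmul (mmul (Bpow k) g) (minv (ABpow u (v + k)))
      = mmul (conj (Bpow k) (mmul g (minv (ABpow u v))))
             (mmul (mmul (Bpow k) (Apow u)) (mmul (minv (Bpow k)) (minv (Apow u))))"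
    by (cases g) (simp add: conj_def ABpow_def Apow_def Bpow_def algebra_simps)
  moreover have "mmul (mmul (Bpow k) (Apow u)) (mmul (minv (Bpow k)) (minv (Apow u))) \<in> Gamma2_comm_pm"
    unfolding Gamma2_comm_pm_def commutators_def
    by (rule gen_subgroup.gen_base) (blast intro: Apow_Gamma2 Bpow_Gamma2)
  ultimately show ?case
    using Gamma2_comm_pm_conj[OF Bpow_Gamma2 B.IH] B.hyps
    by (simp add: expsum_Bpow_mmul u_def v_def add.commute Gamma2_comm_pm_def gen_subgroup.gen_mul
        del: mmul.simps)
qed

lemma Phi_iff: "g \<in> Phi n \<longleftrightarrow> g \<in> Gamma2 \<and> int n dvd fst (expsum g) \<and> int n dvd snd (expsum g)"
proof
  assume "g \<in> Phi n"
  then show "g \<in> Gamma2 \<and> int n dvd fst (expsum g) \<and> int n dvd snd (expsum g)"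
    using Phi_subset by blast
next
  assume g: "g \<in> Gamma2 \<and> int n dvd fst (expsum g) \<and> int n dvd snd (expsum g)"
  then obtain s t where st: "fst (expsum g) = int n * s" "snd (expsum g) = int n * t"
    by (auto elim!: dvdE)
  define w where "w = ABpow (fst (expsum g)) (snd (expsum g))"
  have "mmul g (minv w) \<in> Phi n"
    using Gamma2_decomp g Gamma2_comm_pm_Phi unfolding w_def by blast
  moreover have "w \<in> Phi n"
    unfolding w_def ABpow_def st by (intro Phi_mmul Apow_Phi Bpow_Phi)
  moreover have "w \<in> SL2"
    unfolding w_def ABpow_def by (intro SL2_mmul Gamma2_SL2 Apow_Gamma2 Bpow_Gamma2)
  ultimately show "g \<in> Phi n"
    using Phi_mmul[of "mmul g (minv w)" n w] by (simp add: mmul_assoc mmul_minv_left del: mmul.simps)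
qed

section \<open>Labels of right cosets of \<open>\<Phi>(n)\<close>\<close>

lemma less_6_cases: "c < (6::nat) \<Longrightarrow> c = 0 \<or> c = 1 \<or> c = 2 \<or> c = 3 \<or> c = 4 \<or> c = 5"
  by auto

text \<open>The six elements of \<open>SL\<^sub>2(\<int>/2)\<close>, i.e. the cosets \<open>\<Gamma>(2) m\<close>, with representatives
  \<open>1, \<sigma>, \<tau>, \<tau>\<^sup>2, [1 1; 0 1], [1 0; 1 1]\<close>.\<close>

definition class_rep :: "nat \<Rightarrow> mat2" where
  "class_rep c = (if c = 1 then msigma else if c = 2 then mtau else if c = 3 then mmul mtau mtau
     else if c = 4 then (1, 1, 0, 1) else if c = 5 then (1, 0, 1, 1) else mone)"

definition parity_class :: "mat2 \<Rightarrow> nat" where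
  "parity_class m = (case mod2 m of (p, b, q, d) \<Rightarrow>
     if q = 0 then (if b = 0 then 0 else 4) else if p = 0 then (if d = 0 then 1 else 2)
     else if d = 0 then 3 else 5)"

lemma mod2_SL2:
  assumes "m \<in> SL2"
  shows "mod2 m \<in> {(1,0,0,1), (0,1,1,0), (0,1,1,1), (1,1,1,0), (1,1,0,1), (1,0,1,1)}"
proof -
  obtain p b q d where m: "m = (p, b, q, d)" by (cases m)
  have "((p mod 2) * (d mod 2) - (b mod 2) * (q mod 2)) mod 2
      = ((p mod 2) * (d mod 2) mod 2 - (b mod 2) * (q mod 2) mod 2) mod 2"
    by (rule mod_diff_eq[symmetric])
  also have "\<dots> = (p * d mod 2 - b * q mod 2) mod 2"
    by (simp only: mod_mult_eq)
  finally have "(p * d - b * q) mod 2 = ((p mod 2) * (d mod 2) - (b mod 2) * (q mod 2)) mod 2"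
    by (simp add: mod_diff_eq)
  then have det: "((p mod 2) * (d mod 2) - (b mod 2) * (q mod 2)) mod 2 = 1"
    using assms m by (simp add: SL2_iff)
  have "p mod 2 = 0 \<or> p mod 2 = 1" "b mod 2 = 0 \<or> b mod 2 = 1"
    "q mod 2 = 0 \<or> q mod 2 = 1" "d mod 2 = 0 \<or> d mod 2 = 1"
    by presburger+
  then show ?thesis using det m by (elim disjE) simp_all
qed

lemma parity_class_lt6: "parity_class m < 6"
  by (simp add: parity_class_def split: prod.split)

lemma class_rep_SL2: "class_rep c \<in> SL2"
  by (simp add: class_rep_def msigma_def mtau_def mone_def SL2_iff)

lemma parity_class_class_rep: "c < 6 \<Longrightarrow> parity_class (class_rep c) = c"
  by (drule less_6_cases) (auto simp: class_rep_def parity_class_def msigma_def mtau_def mone_def)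

lemma parity_class_Gamma2_mmul:
  assumes "g \<in> Gamma2"
  shows "parity_class (mmul g m) = parity_class m"
proof -
  have "mod2 (mmul g m) = mod2 m"
    using mod2_mmul[of g m] assms by (cases m) (simp add: Gamma2_iff_mod2)
  then show ?thesis by (simp add: parity_class_def)
qed

definition Gamma2_part :: "mat2 \<Rightarrow> mat2" where
  "Gamma2_part m = mmul m (minv (class_rep (parity_class m)))"

lemma Gamma2_part_Gamma2:
  assumes "m \<in> SL2"
  shows "Gamma2_part m \<in> Gamma2"
proof -
  have "Gamma2_part m \<in> SL2"
    unfolding Gamma2_part_def by (intro SL2_mmul SL2_minv assms class_rep_SL2)
  moreover have "mod2 (Gamma2_part m) = mod2 (mmul (mod2 m) (mod2 (minv (class_rep (parity_class m)))))"
    unfolding Gamma2_part_def by (rule mod2_mmul)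
  moreover have "\<dots> = (1, 0, 0, 1)"
    using mod2_SL2[OF assms]
    by (elim insertE emptyE) (simp_all add: parity_class_def class_rep_def msigma_def mtau_def mone_def)
  ultimately show ?thesis by (simp add: Gamma2_iff_mod2)
qed

lemma Gamma2_part_mmul: "g \<in> Gamma2 \<Longrightarrow> Gamma2_part (mmul g m) = mmul g (Gamma2_part m)"
  by (simp add: Gamma2_part_def parity_class_Gamma2_mmul mmul_assoc del: mmul.simps)

lemma Gamma2_part_decomp: "m \<in> SL2 \<Longrightarrow> m = mmul (Gamma2_part m) (class_rep (parity_class m))"
  by (simp add: Gamma2_part_def mmul_assoc mmul_minv_left class_rep_SL2 del: mmul.simps)

type_synonym label = "nat \<times> int \<times> int"

text \<open>The right coset \<open>\<Phi>(n) m\<close> is labelled by the class of \<open>m\<close> modulo \<open>\<Gamma>(2)\<close> together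
  with the exponent sums of its \<open>\<Gamma>(2)\<close>-part modulo \<open>n\<close>.\<close>

definition label :: "nat \<Rightarrow> mat2 \<Rightarrow> label" where
  "label n m = (parity_class m, fst (expsum (Gamma2_part m)) mod int n,
                snd (expsum (Gamma2_part m)) mod int n)"

lemma Phi_Gamma2: "g \<in> Phi n \<Longrightarrow> g \<in> Gamma2"
  by (simp add: Phi_iff)

lemma label_Phi_mmul:
  assumes "g \<in> Phi n" "m \<in> SL2"
  shows "label n (mmul g m) = label n m"
proof -
  have g: "g \<in> Gamma2" using assms(1) by (rule Phi_Gamma2)
  obtain s t where st: "fst (expsum g) = int n * s" "snd (expsum g) = int n * t"
    using assms(1) by (auto simp: Phi_iff elim!: dvdE)
  show ?thesis
    using st expsum_mmul[OF g Gamma2_part_Gamma2[OF assms(2)]]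
    by (simp add: label_def parity_class_Gamma2_mmul[OF g] Gamma2_part_mmul[OF g])
qed

lemma Phi_of_label_eq:
  assumes "m \<in> SL2" "m' \<in> SL2" "label n m = label n m'"
  shows "mmul m' (minv m) \<in> Phi n"
proof -
  define r where "r = class_rep (parity_class m)"
  have cls: "parity_class m' = parity_class m" using assms(3) by (simp add: label_def)
  have r: "r \<in> SL2" unfolding r_def by (rule class_rep_SL2)
  have "mmul (Gamma2_part m') (minv (Gamma2_part m)) = mmul (mmul m' (mmul (minv r) r)) (minv m)"
    by (simp add: Gamma2_part_def cls r_def[symmetric] minv_mmul mmul_assoc del: mmul.simps)
  then have eq: "mmul (Gamma2_part m') (minv (Gamma2_part m)) = mmul m' (minv m)"
    by (simp add: mmul_minv_left[OF r] del: mmul.simps)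
  have G: "Gamma2_part m \<in> Gamma2" "Gamma2_part m' \<in> Gamma2"
    using assms(1,2) by (simp_all add: Gamma2_part_Gamma2)
  have "int n dvd fst (expsum (Gamma2_part m')) - fst (expsum (Gamma2_part m))"
       "int n dvd snd (expsum (Gamma2_part m')) - snd (expsum (Gamma2_part m))"
    using assms(3)[symmetric] by (simp_all add: label_def mod_eq_dvd_iff)
  then show ?thesis
    using G eq[symmetric]
    by (simp add: Phi_iff Gamma2_mmul Gamma2_minv expsum_mmul expsum_minv del: mmul.simps)
qed

lemma rcoset_Phi_mmul:
  assumes "g \<in> Phi n"
  shows "rcoset (Phi n) (mmul g m) = rcoset (Phi n) m"
proof -
  have g: "g \<in> SL2" using assms Phi_Gamma2 Gamma2_SL2 by blast
  have "mmul h (mmul g m) \<in> rcoset (Phi n) m" if "h \<in> Phi n" for h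
  proof -
    have "mmul h (mmul g m) = mmul (mmul h g) m"
      by (simp add: mmul_assoc del: mmul.simps)
    then show ?thesis
      using Phi_mmul[OF that assms] unfolding rcoset_def by blast
  qed
  moreover have "mmul h m \<in> rcoset (Phi n) (mmul g m)" if "h \<in> Phi n" for h
  proof -
    have "mmul (minv g) (mmul g m) = m"
      by (simp add: mmul_assoc[symmetric] mmul_minv_left[OF g] del: mmul.simps)
    then have "mmul h m = mmul (mmul h (minv g)) (mmul g m)"
      by (simp add: mmul_assoc del: mmul.simps)
    then show ?thesis
      using Phi_mmul[OF that Phi_minv[OF assms]] unfolding rcoset_def by blast
  qed
  ultimately show ?thesis
    unfolding rcoset_def by blast
qed

lemma rcoset_Phi_eq_iff:
  assumes "m \<in> SL2" "m' \<in> SL2"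
  shows "rcoset (Phi n) m = rcoset (Phi n) m' \<longleftrightarrow> label n m = label n m'"
proof
  assume "rcoset (Phi n) m = rcoset (Phi n) m'"
  moreover have "m' \<in> rcoset (Phi n) m'"
    using mone_Phi mmul_mone_left[of m'] unfolding rcoset_def by (metis (mono_tags, lifting) mem_Collect_eq)
  ultimately obtain g where "g \<in> Phi n" "m' = mmul g m"
    unfolding rcoset_def by blast
  then show "label n m = label n m'"
    using label_Phi_mmul assms by simp
next
  assume "label n m = label n m'"
  then have g: "mmul m' (minv m) \<in> Phi n"
    by (rule Phi_of_label_eq[OF assms])
  have "mmul (mmul m' (minv m)) m = m'"
    by (simp add: mmul_assoc mmul_minv_left[OF assms(1)] del: mmul.simps)
  then show "rcoset (Phi n) m = rcoset (Phi n) m'"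
    using rcoset_Phi_mmul[OF g, of m] by simp
qed

fun label_norm :: "nat \<Rightarrow> label \<Rightarrow> label" where
  "label_norm n (c, u, v) = (c, u mod int n, v mod int n)"

fun label_rep :: "nat \<Rightarrow> label \<Rightarrow> mat2" where
  "label_rep n (c, u, v) = mmul (ABpow (u mod int n) (v mod int n)) (class_rep c)"

lemma ABpow_Gamma2: "ABpow u v \<in> Gamma2"
  by (simp add: ABpow_def Gamma2_mmul)

lemma expsum_ABpow: "expsum (ABpow u v) = (u, v)"
  by (simp add: ABpow_def expsum_mmul)

lemma label_rep_SL2: "label_rep n k \<in> SL2"
  by (cases k) (simp add: SL2_mmul Gamma2_SL2[OF ABpow_Gamma2] class_rep_SL2 del: mmul.simps)

lemma label_rep_label_norm: "label_rep n (label_norm n k) = label_rep n k"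
  by (cases k) simp

lemma label_label_rep:
  assumes "fst k < 6"
  shows "label n (label_rep n k) = label_norm n k"
proof -
  obtain c u v where k: "k = (c, u, v)" by (cases k)
  have c: "c < 6" using assms k by simp
  have cls: "parity_class (label_rep n k) = c"
    using k parity_class_Gamma2_mmul[OF ABpow_Gamma2] parity_class_class_rep[OF c] by simp
  have "Gamma2_part (label_rep n k) = ABpow (u mod int n) (v mod int n)"
    unfolding Gamma2_part_def cls
    by (simp add: k mmul_assoc mmul_minv_right[OF class_rep_SL2] del: mmul.simps)
  then show ?thesis
    using cls by (simp add: label_def expsum_ABpow k)
qed

lemma label_mmul_right:
  assumes "m \<in> SL2" "x \<in> SL2"
  defines "r \<equiv> class_rep (parity_class m)"
  defines "e \<equiv> expsum (Gamma2_part m) + expsum (Gamma2_part (mmul r x))"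
  shows "label n (mmul m x) = (parity_class (mmul r x), fst e mod int n, snd e mod int n)"
proof -
  have G: "Gamma2_part m \<in> Gamma2" using assms(1) by (rule Gamma2_part_Gamma2)
  have rx: "mmul r x \<in> SL2" unfolding r_def by (intro SL2_mmul class_rep_SL2 assms(2))
  have mx: "mmul m x = mmul (Gamma2_part m) (mmul r x)"
    using Gamma2_part_decomp[OF assms(1)] unfolding r_def by (metis mmul_assoc)
  show ?thesis
    unfolding label_def mx parity_class_Gamma2_mmul[OF G] Gamma2_part_mmul[OF G]
      expsum_mmul[OF G Gamma2_part_Gamma2[OF rx]] e_def ..
qed

text \<open>The shifts in \<open>label_tau\<close> come from \<open>\<sigma> \<tau> = A\<^sup>-\<^sup>1 [1 1; 0 1]\<close>,
  \<open>[1 1; 0 1] \<tau> = -A B\<^sup>-\<^sup>1 [1 0; 1 1]\<close> and \<open>[1 0; 1 1] \<tau> = -B \<sigma>\<close>.\<close>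

definition class_sigma :: "nat \<Rightarrow> nat" where
  "class_sigma c = (if c = 0 then 1 else if c = 1 then 0 else if c = 2 then 5 else if c = 5 then 2
     else if c = 3 then 4 else 3)"

fun label_sigma :: "label \<Rightarrow> label" where
  "label_sigma (c, u, v) = (class_sigma c, u, v)"

fun label_tau :: "label \<Rightarrow> label" where
  "label_tau (c, u, v) =
     (if c = 0 then (2, u, v) else if c = 2 then (3, u, v) else if c = 3 then (0, u, v)
      else if c = 1 then (4, u - 1, v) else if c = 4 then (5, u + 1, v - 1) else (1, u, v + 1))"

lemma label_norm_label: "label_norm n (label n a) = label n a"
  by (simp add: label_def)

lemma label_norm_label_sigma: "label_norm n (label_sigma (label_norm n k)) = label_norm n (label_sigma k)"
  by (cases k) simp

lemma label_norm_label_tau: "label_norm n (label_tau (label_norm n k)) = label_norm n (label_tau k)"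
  by (cases k) (simp add: mod_add_left_eq mod_diff_left_eq)

lemma class_rep_mmul_sigma:
  "c < 6 \<Longrightarrow> parity_class (mmul (class_rep c) msigma) = class_sigma c
     \<and> expsum (Gamma2_part (mmul (class_rep c) msigma)) = 0"
  by (drule less_6_cases)
    (auto simp: class_sigma_def Gamma2_part_def parity_class_def class_rep_def msigma_def mtau_def
      mone_def expsum.simps brem_def bquot_def zero_prod_def)

lemma class_rep_mmul_tau:
  "c < 6 \<Longrightarrow> parity_class (mmul (class_rep c) mtau) = fst (label_tau (c, 0, 0))
     \<and> expsum (Gamma2_part (mmul (class_rep c) mtau)) = snd (label_tau (c, 0, 0))"
  by (drule less_6_cases)
    (auto simp: Gamma2_part_def parity_class_def class_rep_def msigma_def mtau_def
      mone_def expsum.simps brem_def bquot_def)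

lemma label_mmul_sigma:
  assumes "m \<in> SL2"
  shows "label n (mmul m msigma) = label_norm n (label_sigma (label n m))"
proof -
  define c X Y where "c = parity_class m"
    and "X = fst (expsum (Gamma2_part m))" and "Y = snd (expsum (Gamma2_part m))"
  have s: "msigma \<in> SL2" by (simp add: msigma_def SL2_iff)
  have C: "parity_class (mmul (class_rep c) msigma) = class_sigma c"
    "expsum (Gamma2_part (mmul (class_rep c) msigma)) = 0"
    using class_rep_mmul_sigma[OF parity_class_lt6[of m]] by (simp_all add: c_def)
  have "label n (mmul m msigma) = (class_sigma c, X mod int n, Y mod int n)"
    using label_mmul_right[OF assms s, of n] C by (simp add: c_def X_def Y_def)
  moreover have "label n m = (c, X mod int n, Y mod int n)"
    by (simp add: label_def c_def X_def Y_def)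
  ultimately show ?thesis by simp
qed

lemma label_mmul_tau:
  assumes "m \<in> SL2"
  shows "label n (mmul m mtau) = label_norm n (label_tau (label n m))"
proof -
  define c X Y where "c = parity_class m"
    and "X = fst (expsum (Gamma2_part m))" and "Y = snd (expsum (Gamma2_part m))"
  have t: "mtau \<in> SL2" by (simp add: mtau_def SL2_iff)
  obtain c' du dv where lt: "label_tau (c, 0, 0) = (c', du, dv)"
    by (metis prod_cases3)
  have C: "parity_class (mmul (class_rep c) mtau) = c'"
    "expsum (Gamma2_part (mmul (class_rep c) mtau)) = (du, dv)"
    using class_rep_mmul_tau[OF parity_class_lt6[of m]] lt by (simp_all add: c_def)
  have "label n (mmul m mtau) = (c', (X + du) mod int n, (Y + dv) mod int n)"
    using label_mmul_right[OF assms t, of n] C by (simp add: c_def X_def Y_def)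
  moreover have "label_tau (c, X mod int n, Y mod int n) = (c', X mod int n + du, Y mod int n + dv)"
    using lt by (simp split: if_splits)
  moreover have "label n m = (c, X mod int n, Y mod int n)"
    by (simp add: label_def c_def X_def Y_def)
  ultimately show ?thesis
    by (simp add: mod_add_left_eq)
qed

type_synonym basis_idx = "nat \<times> nat \<times> nat"

definition delta :: "basis_idx \<Rightarrow> basis_idx \<Rightarrow> int" where
  "delta t i = (if i = t then 1 else 0)"

text \<open>The coordinates, in the proposed basis, of the symbols \<open>[A\<^sup>u B\<^sup>v \<tau>]\<close> and \<open>[A\<^sup>u B\<^sup>v]\<close>.\<close>

definition coords_tau :: "nat \<Rightarrow> int \<Rightarrow> int \<Rightarrow> basis_idx \<Rightarrow> int" where
  "coords_tau n u v i =
     (if u mod int n \<ge> 1 then delta (0, nat (u mod int n), nat (v mod int n)) i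
      else delta (2, 0, 0) i
        + (\<Sum>w\<in>{1..<n}. delta (0, w, n - 1) i - delta (0, w, nat (v mod int n)) i))"

definition coords_step :: "nat \<Rightarrow> int \<Rightarrow> int \<Rightarrow> basis_idx \<Rightarrow> int" where
  "coords_step n u v i = coords_tau n (u - 1) v i - coords_tau n u (v - 1) i"

definition coords_one :: "nat \<Rightarrow> int \<Rightarrow> int \<Rightarrow> basis_idx \<Rightarrow> int" where
  "coords_one n u v i =
     delta (1, 0, nat (v mod int n)) i - (\<Sum>w\<in>{Suc (nat (u mod int n))..<n}. coords_step n (int w) v i)"

lemma coords_tau_mod [simp]:
  "coords_tau n (u mod int n) v i = coords_tau n u v i"
  "coords_tau n u (v mod int n) i = coords_tau n u v i"
  "coords_tau n u (v mod int n - 1) i = coords_tau n u (v - 1) i"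
  by (simp_all add: coords_tau_def mod_diff_left_eq)

lemma coords_step_mod [simp]:
  "coords_step n (u mod int n) v i = coords_step n u v i"
  "coords_step n u (v mod int n) i = coords_step n u v i"
  by (simp_all add: coords_step_def coords_tau_def mod_diff_left_eq)

lemma coords_one_mod [simp]:
  "coords_one n (u mod int n) v i = coords_one n u v i"
  "coords_one n u (v mod int n) i = coords_one n u v i"
  by (simp_all add: coords_one_def)

lemma sum_coords_tau_row:
  assumes "n \<ge> 1"
  shows "(\<Sum>w<n. coords_tau n (int w) v i) = delta (2, 0, 0) i + (\<Sum>w\<in>{1..<n}. delta (0, w, n - 1) i)"
proof -
  have "(\<Sum>w<n. coords_tau n (int w) v i) = coords_tau n 0 v i + (\<Sum>w\<in>{1..<n}. coords_tau n (int w) v i)"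
    using assms by (simp add: lessThan_atLeast0 sum.atLeast_Suc_lessThan)
  also have "(\<Sum>w\<in>{1..<n}. coords_tau n (int w) v i) = (\<Sum>w\<in>{1..<n}. delta (0, w, nat (v mod int n)) i)"
    by (rule sum.cong) (auto simp: coords_tau_def)
  finally show ?thesis
    by (simp add: coords_tau_def sum_subtractf)
qed

lemma sum_coords_step_row:
  assumes "n \<ge> 1"
  shows "(\<Sum>w<n. coords_step n (int w) v i) = 0"
proof -
  obtain m where m: "n = Suc m" using assms by (cases n) auto
  have "(\<Sum>w<n. coords_tau n (int w - 1) v i) = coords_tau n (-1) v i + (\<Sum>w<m. coords_tau n (int w) v i)"
    unfolding m by (subst sum.lessThan_Suc_shift) simp
  also have "coords_tau n (-1) v i = coords_tau n (int m) v i"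
    using coords_tau_mod(1)[of n "-1"] coords_tau_mod(1)[of n "int m"] m by (simp add: zmod_minus1)
  finally have "(\<Sum>w<n. coords_tau n (int w - 1) v i) = (\<Sum>w<n. coords_tau n (int w) v i)"
    using m by simp
  then show ?thesis
    using sum_coords_tau_row[OF assms, of v i] sum_coords_tau_row[OF assms, of "v - 1" i]
    by (simp add: coords_step_def sum_subtractf)
qed

lemma coords_one_diff:
  assumes "n \<ge> 1"
  shows "coords_one n u v i - coords_one n (u - 1) v i = coords_step n u v i"
proof -
  define u' where "u' = nat (u mod int n)"
  have u': "u' < n" "int u' = u mod int n" using assms by (simp_all add: u'_def nat_less_iff)
  have pred: "(u - 1) mod int n = (int u' - 1) mod int n"
    unfolding u'(2) by (rule mod_diff_left_eq[symmetric])
  show ?thesis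
  proof (cases "u' \<ge> 1")
    case True
    have "(int u' - 1) mod int n = int u' - 1"
      using True u'(1) by (intro mod_pos_pos_trivial) auto
    then have "Suc (nat ((u - 1) mod int n)) = u'"
      using pred True by simp
    moreover have "(\<Sum>w\<in>{u'..<n}. coords_step n (int w) v i)
        = coords_step n (int u') v i + (\<Sum>w\<in>{Suc u'..<n}. coords_step n (int w) v i)"
      using u'(1) by (rule sum.atLeast_Suc_lessThan)
    ultimately show ?thesis
      using coords_step_mod(1)[of n u v i] unfolding coords_one_def u'_def[symmetric] u'(2)
      by simp
  next
    case False
    then have u0: "u' = 0" by simp
    then have "u mod int n = 0"
      using u'(2) by simp
    then have step0: "coords_step n 0 v i = coords_step n u v i"
      by (metis coords_step_mod(1))
    have "Suc (nat ((u - 1) mod int n)) = n"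
      using pred assms u0 by (simp add: zmod_minus1)
    moreover have "(\<Sum>w<n. coords_step n (int w) v i)
        = coords_step n 0 v i + (\<Sum>w\<in>{1..<n}. coords_step n (int w) v i)"
      using assms by (simp add: lessThan_atLeast0 sum.atLeast_Suc_lessThan)
    ultimately show ?thesis
      using sum_coords_step_row[OF assms, of v i] u0 step0 unfolding coords_one_def u'_def[symmetric]
      by simp
  qed
qed

fun coords :: "nat \<Rightarrow> label \<Rightarrow> basis_idx \<Rightarrow> int" where
  "coords n (c, u, v) i =
     (if c = 0 then coords_one n u v i
      else if c = 1 then - coords_one n u v i
      else if c = 2 then coords_tau n u v i
      else if c = 3 then - coords_one n u v i - coords_tau n u v i
      else if c = 4 then coords_one n u v i + coords_tau n u v i
      else - coords_tau n u v i)"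

lemma coords_label_sigma:
  "fst k < 6 \<Longrightarrow> coords n (label_sigma k) i = - coords n k i"
  by (cases k) (auto simp: class_sigma_def dest!: less_6_cases)

lemma coords_label_tau:
  assumes "n \<ge> 1" "fst k < 6"
  shows "coords n k i + coords n (label_tau k) i + coords n (label_tau (label_tau k)) i = 0"
proof -
  obtain c u v where k: "k = (c, u, v)" by (cases k)
  have "coords_one n u v i - coords_one n (u - 1) v i = coords_step n u v i"
    "coords_one n (u + 1) v i - coords_one n u v i = coords_step n (u + 1) v i"
    "coords_one n u (v + 1) i - coords_one n (u - 1) (v + 1) i = coords_step n u (v + 1) i"
    using coords_one_diff[OF assms(1), of u v i] coords_one_diff[OF assms(1), of "u + 1" v i]
      coords_one_diff[OF assms(1), of u "v + 1" i]
    by simp_all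
  then show ?thesis
    using less_6_cases[of c] assms(2) k by (auto simp: coords_step_def)
qed

lemma coords_label_norm: "coords n (label_norm n k) i = coords n k i"
  by (cases k) simp

fun basis_label :: "nat \<Rightarrow> basis_idx \<Rightarrow> label" where
  "basis_label n (s, i, j) =
     (if s = 0 then (2, int i, int j) else if s = 1 then (0, int n - 1, int j) else (2, 0, int n - 1))"

lemma basis_index_cases:
  assumes "t \<in> basis_index n"
  obtains (tau) i j where "t = (0, i, j)" "1 \<le> i" "i \<le> n - 1" "j \<le> n - 1"
    | (one) j where "t = (1, 0, j)" "j \<le> n - 1"
    | (last) "t = (2, 0, 0)"
  using assms unfolding basis_index_def by blast

lemma coords_basis_label:
  assumes "n \<ge> 1" "t \<in> basis_index n"
  shows "coords n (basis_label n t) i = delta t i"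
  using assms(2)
proof (cases rule: basis_index_cases)
  case (tau i' j)
  then have "int i' mod int n = int i'" "int j mod int n = int j"
    using assms(1) by auto
  then show ?thesis using tau by (simp add: coords_tau_def)
next
  case (one j)
  have "(int n - 1) mod int n = int n - 1" "int j mod int n = int j"
    using assms(1) one by (auto simp: zmod_minus1)
  then show ?thesis using one assms(1) by (simp add: coords_one_def)
next
  case last
  have "(int n - 1) mod int n = int n - 1" "nat (int n - 1) = n - 1"
    using assms(1) by (auto simp: zmod_minus1)
  then show ?thesis using last by (simp add: coords_tau_def)
qed

lemma basis_mat_eq_label_rep:
  assumes "n \<ge> 1" "t \<in> basis_index n"
  shows "basis_mat n t = label_rep n (basis_label n t)"
  using assms(2)
proof (cases rule: basis_index_cases)
  case (tau i j)
  then have "int i mod int n = int i" "int j mod int n = int j"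
    using assms(1) by auto
  then show ?thesis using tau
    by (simp add: ABpow_def mpow_matA mpow_matB class_rep_def del: mmul.simps)
next
  case (one j)
  have "(int n - 1) mod int n = int n - 1" "int j mod int n = int j"
    using assms(1) one by (auto simp: zmod_minus1)
  then show ?thesis using one assms(1)
    by (simp add: ABpow_def mpow_matA mpow_matB class_rep_def of_nat_diff del: mmul.simps)
next
  case last
  have "(int n - 1) mod int n = int n - 1"
    using assms(1) by (simp add: zmod_minus1)
  then show ?thesis using last assms(1)
    by (simp add: ABpow_def mpow_matA mpow_matB class_rep_def of_nat_diff Apow_zero del: mmul.simps)
qed

section \<open>Manin relations between labels\<close>

lemma zspan_base: "v \<in> S \<Longrightarrow> v \<in> zspan S"
  using zspan.zspan_add[OF zspan.zspan_zero, of v S] by simp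

lemma zspan_add_closed:
  assumes "w \<in> zspan S" "w' \<in> zspan S"
  shows "w + w' \<in> zspan S"
  using assms(2)
proof induction
  case zspan_zero
  then show ?case using assms(1) by (simp only: add_0_right)
next
  case (zspan_add u v)
  have "w + (u + v) = (w + u) + v" by (simp only: add.assoc)
  then show ?case using zspan.zspan_add[OF zspan_add(3,2)] by (simp only:)
next
  case (zspan_diff u v)
  have "w + (u - v) = (w + u) - v" by (simp only: add_diff_eq)
  then show ?case using zspan.zspan_diff[OF zspan_diff(3,2)] by (simp only:)
qed

lemma zspan_uminus:
  assumes "w \<in> zspan S"
  shows "- w \<in> zspan S"
  using assms
proof induction
  case zspan_zero
  then show ?case by (simp only: minus_zero zspan.zspan_zero)
next
  case (zspan_add u v)
  have "- (u + v) = (- u) - v" by (simp add: algebra_simps)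
  then show ?case using zspan.zspan_diff[OF zspan_add(3,2)] by (simp only:)
next
  case (zspan_diff u v)
  have "- (u - v) = (- u) + v" by (simp add: algebra_simps)
  then show ?case using zspan.zspan_add[OF zspan_diff(3,2)] by (simp only:)
qed

lemma zspan_diff_closed: "w \<in> zspan S \<Longrightarrow> w' \<in> zspan S \<Longrightarrow> w - w' \<in> zspan S"
  using zspan_add_closed[of w S "- w'"] zspan_uminus[of w' S] by (simp only: diff_conv_add_uminus)

lemma zspan_scale:
  assumes "w \<in> zspan S"
  shows "(\<lambda>x. c * w x) \<in> zspan S"
proof (induction c rule: int_induct[where k = 0])
  case base
  then show ?case using zspan.zspan_zero by (simp add: zero_fun_def)
next
  case (step1 i)
  then show ?case using zspan_add_closed[OF step1(2) assms] by (simp add: distrib_right plus_fun_def)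
next
  case (step2 i)
  then show ?case using zspan_diff_closed[OF step2(2) assms] by (simp add: left_diff_distrib fun_diff_def)
qed

lemma zspan_lincomb:
  assumes "\<And>a. a \<in> A \<Longrightarrow> f a \<in> zspan S"
  shows "(\<lambda>x. \<Sum>a\<in>A. c a * f a x) \<in> zspan S"
  using assms
proof (induction A rule: infinite_finite_induct)
  case (infinite A)
  then show ?case using zspan.zspan_zero by (simp add: zero_fun_def)
next
  case empty
  then show ?case using zspan.zspan_zero by (simp add: zero_fun_def)
next
  case (insert a A)
  then have "(\<lambda>x. c a * f a x) + (\<lambda>x. \<Sum>a\<in>A. c a * f a x) \<in> zspan S"
    by (intro zspan_add_closed zspan_scale) auto
  then show ?case using insert(1,2) by (simp add: plus_fun_def)
qed

lemma manin_rel_add: "a \<in> manin_rel G \<Longrightarrow> b \<in> manin_rel G \<Longrightarrow> a + b \<in> manin_rel G"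
  unfolding manin_rel_def by (rule zspan_add_closed)

lemma manin_rel_diff: "a \<in> manin_rel G \<Longrightarrow> b \<in> manin_rel G \<Longrightarrow> a - b \<in> manin_rel G"
  unfolding manin_rel_def by (rule zspan_diff_closed)

lemma manin_rel_uminus: "a \<in> manin_rel G \<Longrightarrow> - a \<in> manin_rel G"
  unfolding manin_rel_def by (rule zspan_uminus)

lemma manin_rel_zero: "0 \<in> manin_rel G"
  unfolding manin_rel_def by (rule zspan.zspan_zero)

definition label_gen :: "nat \<Rightarrow> label \<Rightarrow> mat2 set \<Rightarrow> int" where
  "label_gen n k = manin_gen (Phi n) (label_rep n k)"

lemma label_gen_label_norm: "label_gen n (label_norm n k) = label_gen n k"
  by (simp add: label_gen_def label_rep_label_norm)

lemma manin_gen_eq_label_gen: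
  assumes "a \<in> SL2"
  shows "manin_gen (Phi n) a = label_gen n (label n a)"
proof -
  have "fst (label n a) < 6"
    by (simp add: label_def parity_class_lt6)
  then have "label n (label_rep n (label n a)) = label n a"
    using label_label_rep label_norm_label by simp
  then have "rcoset (Phi n) (label_rep n (label n a)) = rcoset (Phi n) a"
    using rcoset_Phi_eq_iff[OF label_rep_SL2 assms] by simp
  then show ?thesis
    by (simp add: label_gen_def manin_gen_def)
qed

lemma label_gen_sigma_rel:
  assumes "fst k < 6"
  shows "label_gen n k + label_gen n (label_sigma k) \<in> manin_rel (Phi n)"
proof -
  define a where "a = label_rep n k"
  have a: "a \<in> SL2" "label n a = label_norm n k"
    unfolding a_def using label_rep_SL2 label_label_rep[OF assms] by auto
  have "msigma \<in> SL2" by (simp add: msigma_def SL2_iff)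
  then have "manin_gen (Phi n) (mmul a msigma) = label_gen n (label_sigma k)"
    using label_mmul_sigma[OF a(1)] a(2) manin_gen_eq_label_gen[OF SL2_mmul[OF a(1)]]
    by (simp add: label_norm_label_sigma label_gen_label_norm del: mmul.simps)
  moreover have "manin_gen (Phi n) a + manin_gen (Phi n) (mmul a msigma) \<in> manin_relators (Phi n)"
    unfolding manin_relators_def using a by blast
  ultimately show ?thesis
    unfolding manin_rel_def by (simp add: label_gen_def a_def zspan_base)
qed

lemma label_gen_tau_rel:
  assumes "fst k < 6"
  shows "label_gen n k + label_gen n (label_tau k) + label_gen n (label_tau (label_tau k))
    \<in> manin_rel (Phi n)"
proof -
  define a where "a = label_rep n k"
  have a: "a \<in> SL2" "label n a = label_norm n k"
    unfolding a_def using label_rep_SL2 label_label_rep[OF assms] by auto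
  have t: "mtau \<in> SL2" by (simp add: mtau_def SL2_iff)
  have at: "mmul a mtau \<in> SL2" "mmul a (mmul mtau mtau) \<in> SL2"
    using a(1) t by (simp_all add: SL2_mmul del: mmul.simps)
  have l1: "label n (mmul a mtau) = label_norm n (label_tau k)"
    using label_mmul_tau[OF a(1)] a(2) by (simp add: label_norm_label_tau)
  then have "label n (mmul a (mmul mtau mtau)) = label_norm n (label_tau (label_tau k))"
    using label_mmul_tau[OF at(1)] by (simp add: mmul_assoc[symmetric] label_norm_label_tau del: mmul.simps)
  then have "manin_gen (Phi n) (mmul a mtau) = label_gen n (label_tau k)"
    "manin_gen (Phi n) (mmul a (mmul mtau mtau)) = label_gen n (label_tau (label_tau k))"
    using l1 manin_gen_eq_label_gen[OF at(1)] manin_gen_eq_label_gen[OF at(2)]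
    by (simp_all add: label_gen_label_norm)
  moreover have "manin_gen (Phi n) a + manin_gen (Phi n) (mmul a mtau)
      + manin_gen (Phi n) (mmul a (mmul mtau mtau)) \<in> manin_relators (Phi n)"
    unfolding manin_relators_def using a by blast
  ultimately show ?thesis
    unfolding manin_rel_def by (simp add: label_gen_def a_def zspan_base)
qed

text \<open>\<open>defect n k \<in> manin_rel (Phi n)\<close> says that the symbol of the coset labelled \<open>k\<close> equals
  \<open>\<Sum>\<^sub>i coords n k i [basis_mat n i]\<close> in \<open>M\<^sub>2(\<Phi>(n))\<close>.\<close>

definition defect :: "nat \<Rightarrow> label \<Rightarrow> mat2 set \<Rightarrow> int" where
  "defect n k = (\<lambda>x. label_gen n k x
     - (\<Sum>i\<in>basis_index n. coords n k i * manin_gen (Phi n) (basis_mat n i) x))"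

lemma finite_basis_index: "finite (basis_index n)"
proof -
  have "basis_index n \<subseteq> {0..2} \<times> {0..n} \<times> {0..n}"
    unfolding basis_index_def by auto
  then show ?thesis by (rule finite_subset) auto
qed

lemma defect_sigma_rel:
  assumes "fst k < 6"
  shows "defect n k + defect n (label_sigma k) \<in> manin_rel (Phi n)"
proof -
  have "defect n k + defect n (label_sigma k) = label_gen n k + label_gen n (label_sigma k)"
    by (rule ext) (simp add: defect_def coords_label_sigma[OF assms] sum_negf)
  then show ?thesis using label_gen_sigma_rel[OF assms] by simp
qed

lemma defect_tau_rel:
  assumes "n \<ge> 1" "fst k < 6"
  shows "defect n k + defect n (label_tau k) + defect n (label_tau (label_tau k)) \<in> manin_rel (Phi n)"
proof -
  have tau2: "coords n (label_tau (label_tau k)) i = - coords n k i - coords n (label_tau k) i" for i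
    using coords_label_tau[OF assms, of i] by simp
  have "defect n k + defect n (label_tau k) + defect n (label_tau (label_tau k))
      = label_gen n k + label_gen n (label_tau k) + label_gen n (label_tau (label_tau k))"
    by (intro ext) (simp add: defect_def tau2 sum_negf algebra_simps sum_subtractf)
  then show ?thesis using label_gen_tau_rel[OF assms(2)] by simp
qed

lemma defect_cong:
  assumes "label_norm n k = label_norm n k'"
  shows "defect n k = defect n k'"
proof -
  have "label_gen n k = label_gen n k'" "\<And>i. coords n k i = coords n k' i"
    using assms label_gen_label_norm coords_label_norm by metis+
  then show ?thesis by (simp add: defect_def)
qed

lemma defect_basis_label:
  assumes "n \<ge> 1" "t \<in> basis_index n"
  shows "defect n (basis_label n t) = 0"
proof (rule ext)
  fix x
  have "(\<Sum>i\<in>basis_index n. coords n (basis_label n t) i * manin_gen (Phi n) (basis_mat n i) x)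
      = (\<Sum>i\<in>basis_index n. if i = t then manin_gen (Phi n) (basis_mat n i) x else 0)"
    by (intro sum.cong) (simp_all add: coords_basis_label[OF assms] delta_def)
  also have "\<dots> = manin_gen (Phi n) (basis_mat n t) x"
    using assms(2) finite_basis_index by simp
  finally show "defect n (basis_label n t) x = 0 x"
    using basis_mat_eq_label_rep[OF assms] by (simp add: defect_def label_gen_def)
qed

lemma defect_basis_label_cong:
  assumes "n \<ge> 1" "t \<in> basis_index n" "label_norm n (basis_label n t) = label_norm n k"
  shows "defect n k \<in> manin_rel (Phi n)"
  using defect_cong[OF assms(3)] defect_basis_label[OF assms(1,2)] manin_rel_zero by simp

lemma defect_tau_pos:
  assumes "n \<ge> 1" "u mod int n \<ge> 1"
  shows "defect n (2, u, v) \<in> manin_rel (Phi n)"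
proof (rule defect_basis_label_cong[OF assms(1)])
  show "(0, nat (u mod int n), nat (v mod int n)) \<in> basis_index n"
    unfolding basis_index_def using assms by (auto simp: nat_le_iff nat_less_iff)
qed (use assms in simp)

lemma defect_tau_zero_last:
  assumes "n \<ge> 1"
  shows "defect n (2, 0, int n - 1) \<in> manin_rel (Phi n)"
  by (rule defect_basis_label_cong[OF assms, of "(2, 0, 0)"]) (simp_all add: basis_index_def)

lemma defect_one_last:
  assumes "n \<ge> 1" "u mod int n = int n - 1"
  shows "defect n (0, u, v) \<in> manin_rel (Phi n)"
proof (rule defect_basis_label_cong[OF assms(1)])
  show "(1, 0, nat (v mod int n)) \<in> basis_index n"
    unfolding basis_index_def using assms by (auto simp: nat_le_iff nat_less_iff)
  have "(int n - 1) mod int n = int n - 1"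
    using assms(1) by (simp add: zmod_minus1)
  then show "label_norm n (basis_label n (1, 0, nat (v mod int n))) = label_norm n (0, u, v)"
    using assms by simp
qed

text \<open>The relation \<open>[A\<^sup>u B\<^sup>v] - [A\<^sup>u\<^sup>-\<^sup>1 B\<^sup>v] = [A\<^sup>u\<^sup>-\<^sup>1 B\<^sup>v \<tau>] - [A\<^sup>u B\<^sup>v\<^sup>-\<^sup>1 \<tau>]\<close>,
  a combination of three \<open>\<sigma>\<close>-relations and two \<open>\<tau>\<close>-relations.\<close>

lemma defect_square_rel:
  assumes "n \<ge> 1"
  shows "- defect n (0, u, v) + defect n (0, u - 1, v) + defect n (2, u - 1, v) - defect n (2, u, v - 1)
    \<in> manin_rel (Phi n)"
proof -
  have S1: "defect n (0, u, v) + defect n (1, u, v) \<in> manin_rel (Phi n)"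
    using defect_sigma_rel[of "(0, u, v)" n] by (simp add: class_sigma_def)
  have T1: "defect n (1, u, v) + defect n (4, u - 1, v) + defect n (5, u, v - 1) \<in> manin_rel (Phi n)"
    using defect_tau_rel[OF assms, of "(1, u, v)"] by simp
  have S2: "defect n (3, u - 1, v) + defect n (4, u - 1, v) \<in> manin_rel (Phi n)"
    using defect_sigma_rel[of "(3, u - 1, v)" n] by (simp add: class_sigma_def)
  have T2: "defect n (0, u - 1, v) + defect n (2, u - 1, v) + defect n (3, u - 1, v) \<in> manin_rel (Phi n)"
    using defect_tau_rel[OF assms, of "(0, u - 1, v)"] by simp
  have S3: "defect n (2, u, v - 1) + defect n (5, u, v - 1) \<in> manin_rel (Phi n)"
    using defect_sigma_rel[of "(2, u, v - 1)" n] by (simp add: class_sigma_def)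
  have "- defect n (0, u, v) + defect n (0, u - 1, v) + defect n (2, u - 1, v) - defect n (2, u, v - 1)
    = (- (defect n (0, u, v) + defect n (1, u, v))
         + (defect n (1, u, v) + defect n (4, u - 1, v) + defect n (5, u, v - 1)))
      - (defect n (3, u - 1, v) + defect n (4, u - 1, v))
      + (defect n (0, u - 1, v) + defect n (2, u - 1, v) + defect n (3, u - 1, v))
      - (defect n (2, u, v - 1) + defect n (5, u, v - 1))"
    by (simp add: algebra_simps)
  also have "\<dots> \<in> manin_rel (Phi n)"
    by (intro manin_rel_add manin_rel_diff manin_rel_uminus S1 S2 S3 T1 T2)
  finally show ?thesis .
qed

lemma defect_one_pos:
  assumes "n \<ge> 1" "1 \<le> u" "u \<le> int n - 1"
  shows "defect n (0, u, v) \<in> manin_rel (Phi n)"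
  using assms(3,2)
proof (induction u rule: int_le_induct)
  case base
  then show ?case by (intro defect_one_last[OF assms(1)]) (simp add: zmod_minus1)
next
  case (step u)
  have "u mod int n = u" "(u - 1) mod int n = u - 1"
    using step by (auto intro: mod_pos_pos_trivial)
  then have D: "defect n (0, u, v) \<in> manin_rel (Phi n)"
      "defect n (2, u - 1, v) \<in> manin_rel (Phi n)" "defect n (2, u, v - 1) \<in> manin_rel (Phi n)"
    using step defect_tau_pos[OF assms(1), of "u - 1" v] defect_tau_pos[OF assms(1), of u "v - 1"]
    by auto
  have T: "- defect n (0, u, v) + defect n (0, u - 1, v) + defect n (2, u - 1, v) - defect n (2, u, v - 1)
      \<in> manin_rel (Phi n)"
    by (rule defect_square_rel[OF assms(1)])
  have "defect n (0, u - 1, v)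
      = (- defect n (0, u, v) + defect n (0, u - 1, v) + defect n (2, u - 1, v) - defect n (2, u, v - 1))
        + defect n (0, u, v) - defect n (2, u - 1, v) + defect n (2, u, v - 1)"
    by (simp add: algebra_simps)
  also have "\<dots> \<in> manin_rel (Phi n)"
    by (intro manin_rel_add manin_rel_diff T D)
  finally show ?case .
qed

lemma defect_zero_row:
  assumes "n \<ge> 1"
  shows "defect n (0, 0, v) \<in> manin_rel (Phi n) \<and> defect n (2, 0, v) \<in> manin_rel (Phi n)"
proof (cases "n = 1")
  case True
  have "defect n (2, 0, int n - 1) = defect n (2, 0, v)"
    by (rule defect_cong) (simp add: True)
  then show ?thesis
    using defect_one_last[OF assms] defect_tau_zero_last[OF assms] True by simp
next
  case False
  then have n2: "n \<ge> 2" using assms by simp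
  have m1: "(-1) mod int n = int n - 1" using n2 by (simp add: zmod_minus1)
  have X: "defect n (0, 0, w) + defect n (2, 0, w) \<in> manin_rel (Phi n)" for w
  proof -
    have D: "defect n (0, 1, w) \<in> manin_rel (Phi n)" "defect n (2, 1, w - 1) \<in> manin_rel (Phi n)"
      using defect_one_pos[OF assms, of 1 w] defect_tau_pos[OF assms, of 1 "w - 1"] n2 by simp_all
    have T: "- defect n (0, 1, w) + defect n (0, 0, w) + defect n (2, 0, w) - defect n (2, 1, w - 1)
        \<in> manin_rel (Phi n)"
      using defect_square_rel[OF assms, of 1 w] by simp
    have "defect n (0, 0, w) + defect n (2, 0, w)
        = (- defect n (0, 1, w) + defect n (0, 0, w) + defect n (2, 0, w) - defect n (2, 1, w - 1))
          + defect n (0, 1, w) + defect n (2, 1, w - 1)"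
      by (simp add: algebra_simps)
    also have "\<dots> \<in> manin_rel (Phi n)"
      by (intro manin_rel_add T D)
    finally show ?thesis .
  qed
  have Y: "defect n (0, 0, w) + defect n (2, 0, w - 1) \<in> manin_rel (Phi n)" for w
  proof -
    have D: "defect n (0, -1, w) \<in> manin_rel (Phi n)" "defect n (2, -1, w) \<in> manin_rel (Phi n)"
      using defect_one_last[OF assms, of "-1" w] defect_tau_pos[OF assms, of "-1" w] m1 n2 by simp_all
    have T: "- defect n (0, 0, w) + defect n (0, -1, w) + defect n (2, -1, w) - defect n (2, 0, w - 1)
        \<in> manin_rel (Phi n)"
      using defect_square_rel[OF assms, of 0 w] by simp
    have "defect n (0, 0, w) + defect n (2, 0, w - 1)
        = - ((- defect n (0, 0, w) + defect n (0, -1, w) + defect n (2, -1, w) - defect n (2, 0, w - 1))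
             - defect n (0, -1, w) - defect n (2, -1, w))"
      by (simp add: algebra_simps)
    also have "\<dots> \<in> manin_rel (Phi n)"
      by (intro manin_rel_uminus manin_rel_diff T D)
    finally show ?thesis .
  qed
  have tau_step: "defect n (2, 0, w) - defect n (2, 0, w - 1) \<in> manin_rel (Phi n)" for w
  proof -
    have "defect n (2, 0, w) - defect n (2, 0, w - 1)
        = (defect n (0, 0, w) + defect n (2, 0, w)) - (defect n (0, 0, w) + defect n (2, 0, w - 1))"
      by (simp add: algebra_simps)
    also have "\<dots> \<in> manin_rel (Phi n)"
      by (intro manin_rel_diff X Y)
    finally show ?thesis .
  qed
  have tau: "defect n (2, 0, v) \<in> manin_rel (Phi n)"
  proof (induction v rule: int_induct[where k = "int n - 1"])
    case base
    show ?case by (rule defect_tau_zero_last[OF assms])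
  next
    case (step1 i)
    then show ?case using manin_rel_add[OF step1(2) tau_step[of "i + 1"]] by simp
  next
    case (step2 i)
    then show ?case using manin_rel_diff[OF step2(2) tau_step[of i]] by simp
  qed
  then show ?thesis
    using manin_rel_diff[OF X[of v] tau] by simp
qed

lemma defect_one:
  assumes "n \<ge> 1"
  shows "defect n (0, u, v) \<in> manin_rel (Phi n)"
proof -
  have "defect n (0, u, v) = defect n (0, u mod int n, v)"
    by (rule defect_cong) simp
  moreover have "0 \<le> u mod int n" "u mod int n < int n"
    using assms by auto
  ultimately show ?thesis
    using defect_zero_row[OF assms, of v] defect_one_pos[OF assms, of "u mod int n" v]
    by (cases "u mod int n = 0") auto
qed

lemma defect_tau:
  assumes "n \<ge> 1"
  shows "defect n (2, u, v) \<in> manin_rel (Phi n)"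
proof (cases "u mod int n \<ge> 1")
  case True
  then show ?thesis by (rule defect_tau_pos[OF assms])
next
  case False
  moreover have "0 \<le> u mod int n" using assms by simp
  ultimately have "defect n (2, u, v) = defect n (2, 0, v)"
    by (intro defect_cong) simp
  then show ?thesis using defect_zero_row[OF assms, of v] by simp
qed

lemma defect_in_manin_rel:
  assumes "n \<ge> 1" "fst k < 6"
  shows "defect n k \<in> manin_rel (Phi n)"
proof -
  obtain c u v where k: "k = (c, u, v)" by (cases k)
  have D0: "defect n (0, u, v) \<in> manin_rel (Phi n)" and D2: "defect n (2, u, v) \<in> manin_rel (Phi n)"
    using defect_one[OF assms(1)] defect_tau[OF assms(1)] by blast+
  have S: "defect n (0, u, v) + defect n (1, u, v) \<in> manin_rel (Phi n)"
    "defect n (2, u, v) + defect n (5, u, v) \<in> manin_rel (Phi n)"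
    "defect n (3, u, v) + defect n (4, u, v) \<in> manin_rel (Phi n)"
    using defect_sigma_rel[of "(0, u, v)" n] defect_sigma_rel[of "(2, u, v)" n]
      defect_sigma_rel[of "(3, u, v)" n]
    by (simp_all add: class_sigma_def)
  have T: "defect n (0, u, v) + defect n (2, u, v) + defect n (3, u, v) \<in> manin_rel (Phi n)"
    using defect_tau_rel[OF assms(1), of "(0, u, v)"] by simp
  have D3: "defect n (3, u, v) \<in> manin_rel (Phi n)"
    using manin_rel_diff[OF manin_rel_diff[OF T D0] D2] by (simp add: algebra_simps)
  have "defect n (1, u, v) \<in> manin_rel (Phi n)" "defect n (5, u, v) \<in> manin_rel (Phi n)"
    "defect n (4, u, v) \<in> manin_rel (Phi n)"
    using manin_rel_diff[OF S(1) D0] manin_rel_diff[OF S(2) D2] manin_rel_diff[OF S(3) D3]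
    by (simp_all add: algebra_simps)
  then show ?thesis
    using k assms(2) less_6_cases[of c] D0 D2 D3 by auto
qed

definition labels :: "nat \<Rightarrow> label set" where
  "labels n = {0..<6} \<times> {0..<int n} \<times> {0..<int n}"

lemma finite_labels: "finite (labels n)"
  by (simp add: labels_def)

lemma label_in_labels: "n \<ge> 1 \<Longrightarrow> label n a \<in> labels n"
  by (simp add: labels_def label_def parity_class_lt6)

lemma label_norm_labels: "k \<in> labels n \<Longrightarrow> label_norm n k = k"
  by (auto simp: labels_def)

lemma rcoset_label_rep_eq_iff:
  assumes "a \<in> SL2" "k \<in> labels n"
  shows "rcoset (Phi n) (label_rep n k) = rcoset (Phi n) a \<longleftrightarrow> k = label n a"
proof -
  have "fst k < 6" using assms(2) by (auto simp: labels_def)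
  then have "label n (label_rep n k) = k"
    using label_label_rep label_norm_labels[OF assms(2)] by simp
  then show ?thesis
    using rcoset_Phi_eq_iff[OF label_rep_SL2 assms(1)] by simp
qed

text \<open>The coordinate map on \<open>M\<^sub>2(\<Phi>(n))\<close>: it is well defined because it kills the relators
  (\<open>coord_fun_manin_rel\<close>), and it inverts the expansion in the basis.\<close>

definition coord_fun :: "nat \<Rightarrow> (mat2 set \<Rightarrow> int) \<Rightarrow> basis_idx \<Rightarrow> int" where
  "coord_fun n v i = (\<Sum>k\<in>labels n. v (rcoset (Phi n) (label_rep n k)) * coords n k i)"

lemma coord_fun_manin_gen:
  assumes "n \<ge> 1" "a \<in> SL2"
  shows "coord_fun n (manin_gen (Phi n) a) i = coords n (label n a) i"
proof -
  have "coord_fun n (manin_gen (Phi n) a) i = (\<Sum>k\<in>labels n. if k = label n a then coords n k i else 0)"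
    unfolding coord_fun_def
    by (intro sum.cong) (auto simp: manin_gen_def rcoset_label_rep_eq_iff[OF assms(2)])
  also have "\<dots> = coords n (label n a) i"
    using label_in_labels[OF assms(1)] finite_labels by simp
  finally show ?thesis .
qed

lemma coord_fun_add: "coord_fun n (v + w) i = coord_fun n v i + coord_fun n w i"
  by (simp add: coord_fun_def sum.distrib algebra_simps)

lemma coord_fun_diff: "coord_fun n (v - w) i = coord_fun n v i - coord_fun n w i"
  by (simp add: coord_fun_def sum_subtractf algebra_simps)

lemma coord_fun_manin_relators:
  assumes "n \<ge> 1" "r \<in> manin_relators (Phi n)"
  shows "coord_fun n r i = 0"
proof -
  have s: "msigma \<in> SL2" and t: "mtau \<in> SL2"
    by (simp_all add: msigma_def mtau_def SL2_iff)
  have lt6: "fst (label n a) < 6" for a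
    by (simp add: label_def parity_class_lt6)
  have norm_tau: "coords n (label_tau (label_norm n k)) i = coords n (label_tau k) i" for k
    by (metis coords_label_norm label_norm_label_tau)
  from assms(2) consider
      (sigma) a where "a \<in> SL2" "r = manin_gen (Phi n) a + manin_gen (Phi n) (mmul a msigma)"
    | (tau) a where "a \<in> SL2"
        "r = manin_gen (Phi n) a + manin_gen (Phi n) (mmul a mtau) + manin_gen (Phi n) (mmul a (mmul mtau mtau))"
    unfolding manin_relators_def by blast
  then show ?thesis
  proof cases
    case sigma
    then show ?thesis
      using coords_label_sigma[OF lt6]
      by (simp add: coord_fun_add coord_fun_manin_gen[OF assms(1)] SL2_mmul s label_mmul_sigma
          coords_label_norm del: mmul.simps)
  next
    case tau
    have "mmul a mtau \<in> SL2" "mmul (mmul a mtau) mtau \<in> SL2"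
      using tau(1) t by (simp_all add: SL2_mmul del: mmul.simps)
    then show ?thesis
      using tau coords_label_tau[OF assms(1) lt6]
      by (simp add: coord_fun_add coord_fun_manin_gen[OF assms(1)] mmul_assoc[symmetric] label_mmul_tau
          coords_label_norm norm_tau del: mmul.simps)
  qed
qed

lemma coord_fun_manin_rel:
  assumes "n \<ge> 1" "r \<in> manin_rel (Phi n)"
  shows "coord_fun n r i = 0"
  using assms(2) unfolding manin_rel_def
proof induction
  case zspan_zero
  then show ?case by (simp add: coord_fun_def)
next
  case (zspan_add w v)
  then show ?case unfolding coord_fun_add using coord_fun_manin_relators[OF assms(1)] by simp
next
  case (zspan_diff w v)
  then show ?case unfolding coord_fun_diff using coord_fun_manin_relators[OF assms(1)] by simp
qed

lemma free_cosets_expand: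
  assumes "n \<ge> 1" "v \<in> free_cosets (Phi n)"
  shows "v x = (\<Sum>k\<in>labels n. v (rcoset (Phi n) (label_rep n k)) * label_gen n k x)"
proof (cases "x \<in> right_cosets (Phi n)")
  case True
  then obtain a where a: "a \<in> SL2" "x = rcoset (Phi n) a"
    by (auto simp: right_cosets_def)
  have "label_gen n k x = (if k = label n a then 1 else 0)" if "k \<in> labels n" for k
  proof -
    have "(rcoset (Phi n) a = rcoset (Phi n) (label_rep n k)) = (k = label n a)"
      using rcoset_label_rep_eq_iff[OF a(1) that] by (simp only: eq_commute)
    then show ?thesis
      unfolding label_gen_def manin_gen_def a(2) by (simp only:)
  qed
  then have "(\<Sum>k\<in>labels n. v (rcoset (Phi n) (label_rep n k)) * label_gen n k x)
      = (\<Sum>k\<in>labels n. if k = label n a then v (rcoset (Phi n) (label_rep n k)) else 0)"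
    by (intro sum.cong) simp_all
  also have "\<dots> = v (rcoset (Phi n) (label_rep n (label n a)))"
    using label_in_labels[OF assms(1)] finite_labels by simp
  also have "rcoset (Phi n) (label_rep n (label n a)) = x"
    using rcoset_label_rep_eq_iff[OF a(1) label_in_labels[OF assms(1)]] a(2) by simp
  finally show ?thesis by simp
next
  case False
  have "label_gen n k x = 0" for k
  proof -
    have "rcoset (Phi n) (label_rep n k) \<in> right_cosets (Phi n)"
      unfolding right_cosets_def using label_rep_SL2 by blast
    then show ?thesis
      using False unfolding label_gen_def manin_gen_def by auto
  qed
  then show ?thesis
    using False assms(2) by (simp add: free_cosets_def)
qed

lemma expansion_in_manin_rel:
  assumes "n \<ge> 1" "v \<in> free_cosets (Phi n)"
  shows "v - (\<lambda>x. \<Sum>t\<in>basis_index n. coord_fun n v t * manin_gen (Phi n) (basis_mat n t) x)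
    \<in> manin_rel (Phi n)"
proof -
  let ?v = "\<lambda>k. v (rcoset (Phi n) (label_rep n k))"
  have "v - (\<lambda>x. \<Sum>t\<in>basis_index n. coord_fun n v t * manin_gen (Phi n) (basis_mat n t) x)
      = (\<lambda>x. \<Sum>k\<in>labels n. ?v k * defect n k x)"
  proof
    fix x
    have "(\<Sum>k\<in>labels n. \<Sum>t\<in>basis_index n. ?v k * (coords n k t * manin_gen (Phi n) (basis_mat n t) x))
        = (\<Sum>t\<in>basis_index n. coord_fun n v t * manin_gen (Phi n) (basis_mat n t) x)"
      by (subst sum.swap) (simp add: coord_fun_def sum_distrib_right mult.assoc)
    then show "(v - (\<lambda>x. \<Sum>t\<in>basis_index n. coord_fun n v t * manin_gen (Phi n) (basis_mat n t) x)) x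
        = (\<Sum>k\<in>labels n. ?v k * defect n k x)"
      using free_cosets_expand[OF assms, of x]
      by (simp add: defect_def right_diff_distrib sum_subtractf sum_distrib_left)
  qed
  also have "\<dots> \<in> manin_rel (Phi n)"
  proof -
    have "defect n k \<in> zspan (manin_relators (Phi n))" if "k \<in> labels n" for k
      using defect_in_manin_rel[OF assms(1), of k] that by (auto simp: labels_def manin_rel_def)
    then show ?thesis
      unfolding manin_rel_def by (rule zspan_lincomb)
  qed
  finally show ?thesis .
qed

lemma basis_mat_SL2: "basis_mat n t \<in> SL2"
proof -
  have "mtau \<in> SL2" "mpow matA k \<in> SL2" "mpow matB k \<in> SL2" for k
    by (simp_all add: mtau_def SL2_iff mpow_matA mpow_matB Gamma2_SL2)
  then show ?thesis by (cases t) (simp add: SL2_mmul del: mmul.simps)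
qed

lemma coord_fun_manin_gen_basis:
  assumes "n \<ge> 1" "s \<in> basis_index n"
  shows "coord_fun n (manin_gen (Phi n) (basis_mat n s)) i = delta s i"
proof -
  have "fst (basis_label n s) < 6"
    by (cases s) simp
  then have "label n (basis_mat n s) = label_norm n (basis_label n s)"
    using basis_mat_eq_label_rep[OF assms] label_label_rep by simp
  then show ?thesis
    using coord_fun_manin_gen[OF assms(1) basis_mat_SL2] coords_basis_label[OF assms]
    by (simp add: coords_label_norm)
qed

lemma coord_fun_basis_lincomb:
  assumes "n \<ge> 1" "t \<in> basis_index n"
  shows "coord_fun n (\<lambda>x. \<Sum>s\<in>basis_index n. c s * manin_gen (Phi n) (basis_mat n s) x) t = c t"
proof -
  have "coord_fun n (\<lambda>x. \<Sum>s\<in>basis_index n. c s * manin_gen (Phi n) (basis_mat n s) x) t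
      = (\<Sum>s\<in>basis_index n. c s * coord_fun n (manin_gen (Phi n) (basis_mat n s)) t)"
    unfolding coord_fun_def sum_distrib_right sum_distrib_left mult.assoc by (rule sum.swap)
  also have "\<dots> = (\<Sum>s\<in>basis_index n. if t = s then c s else 0)"
    by (intro sum.cong) (simp_all add: coord_fun_manin_gen_basis[OF assms(1)] delta_def)
  also have "\<dots> = c t"
    using assms(2) finite_basis_index by simp
  finally show ?thesis .
qed

lemma basis_coeffs_unique:
  assumes "n \<ge> 1" "t \<in> basis_index n"
    and "v - (\<lambda>x. \<Sum>s\<in>basis_index n. c s * manin_gen (Phi n) (basis_mat n s) x) \<in> manin_rel (Phi n)"
  shows "c t = coord_fun n v t"
  using coord_fun_manin_rel[OF assms(1,3), of t] coord_fun_basis_lincomb[OF assms(1,2), of c]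
  by (simp add: coord_fun_diff)

lemma card_basis_index:
  assumes "n \<ge> 1"
  shows "card (basis_index n) = n^2 + 1"
proof -
  define X where "X = (\<lambda>(i, j). (0::nat, i, j)) ` ({1..n - 1} \<times> {0..n - 1})"
  define Y where "Y = (\<lambda>j. (1::nat, 0::nat, j)) ` {0..n - 1}"
  have "basis_index n = X \<union> Y \<union> {(2, 0, 0)}"
    unfolding basis_index_def X_def Y_def by auto
  moreover have "card X = (n - 1) * n" "card Y = n"
    unfolding X_def Y_def using assms by (subst card_image; auto simp: inj_on_def)+
  moreover have "finite X" "finite Y" "X \<inter> Y = {}" "(2, 0, 0) \<notin> X \<union> Y"
    by (auto simp: X_def Y_def)
  ultimately have "card (basis_index n) = (n - 1) * n + n + 1"
    by (simp add: card_Un_disjoint)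
  also have "\<dots> = n^2 + 1"
    using assms by (simp add: power2_eq_square algebra_simps)
  finally show ?thesis .
qed

theorem proposition4p1:
  fixes n :: nat
  assumes "n \<ge> 1"
  shows "card (basis_index n) = n^2 + 1 \<and> is_manin_basis (Phi n) (basis_index n) (basis_mat n)"
proof -
  have "\<exists>!c. (\<forall>k. k \<notin> basis_index n \<longrightarrow> c k = 0) \<and>
      v - (\<lambda>x. \<Sum>k\<in>basis_index n. c k * manin_gen (Phi n) (basis_mat n k) x) \<in> manin_rel (Phi n)"
    if v: "v \<in> free_cosets (Phi n)" for v
  proof (rule ex1I)
    let ?c = "\<lambda>t. if t \<in> basis_index n then coord_fun n v t else 0"
    show "(\<forall>k. k \<notin> basis_index n \<longrightarrow> ?c k = 0) \<and>
      v - (\<lambda>x. \<Sum>k\<in>basis_index n. ?c k * manin_gen (Phi n) (basis_mat n k) x) \<in> manin_rel (Phi n)"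
      using expansion_in_manin_rel[OF assms v] by simp
    show "c = ?c" if "(\<forall>k. k \<notin> basis_index n \<longrightarrow> c k = 0) \<and>
      v - (\<lambda>x. \<Sum>k\<in>basis_index n. c k * manin_gen (Phi n) (basis_mat n k) x) \<in> manin_rel (Phi n)" for c
      using that basis_coeffs_unique[OF assms] by fastforce
  qed
  then show ?thesis
    using card_basis_index[OF assms] finite_basis_index basis_mat_SL2
    unfolding is_manin_basis_def by blast
qed

end
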